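(* Let $n$ be a positive integer, let $1\le p\le n$ and $q=n+1-p$, and set $P=\binom{p}{2}$, $Q=\binom{q}{2}$. Then \[\binom{P+Q}{P}\cdot r(p\cdots 321)\cdot r(q\cdots 321) = \sum_{\pi\in\mathcal{B}(p,n)} r(\pi),\] where $p\cdots 321\in S_p$ and $q\cdots 321\in S_q$ denote the longest (reversal) permutations.
   Context: $S_n$ is the symmetric group on $\{1,\dots,n\}$, with elements in one-line notation $\pi=\pi_1\cdots\pi_n$. With $s_i=(i,i+1)$, a reduced word for $\pi$ is a word $i_1\cdots i_l$ of minimal length with $\pi=s_{i_1}\cdots s_{i_l}$; $r(\pi)$ is the number of reduced words of $\pi$ (so $r$ of the identity is $1$). For a word $w=w_1\cdots w_k$ with distinct integer letters, $\operatorname{fl}(w)=\phi(w_1)\cdots\phi(w_k)\in S_k$ where $\phi$ is the order-preserving bijection $\{w_1,\dots,w_k\}\to\{1,\dots,k\}$. The sets $\mathcal{B}(m,n)\subseteq S_n$ for $1\le m\le n$ are defined recursively: $\mathcal{B}(1,n)=\mathcal{B}(n,n)=\{n\cdots 321\}$, and for $1<m<n$, $\mathcal{B}(m,n)$ is the set of $\pi\in S_n$ such that either $\pi_1=m$ and $\operatorname{fl}(\pi_2\cdots\pi_n)\in\mathcal{B}(m-1,n-1)$, or $\pi_n=m$ and $\operatorname{fl}(\pi_1\cdots\pi_{n-1})\in\mathcal{B}(m,n-1)$. *)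

theory Defs
  imports Main
begin

definition perms :: "nat \<Rightarrow> nat list set" where
  "perms n = {xs. length xs = n \<and> distinct xs \<and> set xs = {1..n}}"

definition perm_of :: "nat list \<Rightarrow> nat \<Rightarrow> nat" where
  "perm_of xs j = (if 1 \<le> j \<and> j \<le> length xs then xs ! (j - 1) else j)"

definition adj :: "nat \<Rightarrow> nat \<Rightarrow> nat" where
  "adj i j = (if j = i then i + 1 else if j = i + 1 then i else j)"

definition word_perm :: "nat list \<Rightarrow> nat \<Rightarrow> nat" where
  "word_perm w = foldr (\<lambda>i f. adj i \<circ> f) w id"

definition words_of :: "nat \<Rightarrow> nat list \<Rightarrow> nat list set" where
  "words_of n xs = {w. set w \<subseteq> {1..<n} \<and> word_perm w = perm_of xs}"

definition coxeter_length :: "nat \<Rightarrow> nat list \<Rightarrow> nat" where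
  "coxeter_length n xs = (LEAST k. \<exists>w \<in> words_of n xs. length w = k)"

definition reduced_words :: "nat \<Rightarrow> nat list \<Rightarrow> nat list set" where
  "reduced_words n xs = {w \<in> words_of n xs. length w = coxeter_length n xs}"

definition num_reduced :: "nat \<Rightarrow> nat list \<Rightarrow> nat" where
  "num_reduced n xs = card (reduced_words n xs)"

definition fl :: "nat list \<Rightarrow> nat list" where
  "fl w = map (\<lambda>x. card {y \<in> set w. y \<le> x}) w"

text \<open>The sets B(m,n), meaningful for 1 \<le> m \<le> n.\<close>

function B :: "nat \<Rightarrow> nat \<Rightarrow> nat list set" where
  "B m n =
    (if 1 < m \<and> m < n then
       (let L = B (m - 1) (n - 1); R = B m (n - 1) in
        {xs \<in> perms n. (hd xs = m \<and> fl (tl xs) \<in> L) \<or> (last xs = m \<and> fl (butlast xs) \<in> R)})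
     else if m = 1 \<or> m = n then {rev [1..<n+1]}
     else {})"
  by pat_completeness auto
termination by (relation "measure snd") auto

end

(*
  Write q = n + 1 - p and call a word in the letters 1, ..., n-1 a shuffle if its letters below p
  form a reduced word of the reversal of {1..p} and its other letters form a reduced word of the
  reversal of {p..n}; there are binom(P + Q, P) r(p...21) r(q...21) shuffles. Every shuffle is
  reduced, and all reduced words of the permutation it represents are again shuffles: by induction
  on the length, a reduced word ending in a letter j is compared with one ending in the last letter
  i of the given shuffle through a commutation or braid move at the end, and such a move cannot mix
  the two alphabets without repeating a letter in one of the two parts. So the number of shuffles is
  the sum of r(pi) over the permutations pi represented by shuffles, and these are exactly the
  elements of B(p,n): the value p sits in position 1 or n of pi, and removing it corresponds to
  removing the prefix s_(p-1)...s_1, respectively s_p...s_(n-1), of a shuffle of the smaller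
  instance.
*)

theory Submission
  imports Defs "HOL-Combinatorics.Permutations"
begin

section \<open>Words in adjacent transpositions\<close>

lemma adj_eq_transpose: "adj i = transpose i (Suc i)"
  by (auto simp: adj_def transpose_def)

lemma adj_adj [simp]: "adj i (adj i c) = c"
  by (auto simp: adj_def)

lemma adj_comp_adj [simp]: "adj i \<circ> adj i = id" "f \<circ> adj i \<circ> adj i = f"
  by auto

lemma adj_commute: "Suc i < j \<or> Suc j < i \<Longrightarrow> adj i (adj j c) = adj j (adj i c)"
  by (auto simp: adj_def)

lemma adj_comp_commute:
  assumes "Suc i < j \<or> Suc j < i"
  shows "adj i \<circ> adj j = adj j \<circ> adj i"
  using adj_commute[OF assms] by auto

lemma adj_braid: "j = Suc i \<or> i = Suc j \<Longrightarrow> adj i (adj j (adj i c)) = adj j (adj i (adj j c))"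
  by (auto simp: adj_def)

lemma permutes_adj: "1 \<le> i \<Longrightarrow> i < n \<Longrightarrow> adj i permutes {1..n}"
  unfolding adj_eq_transpose by (rule permutes_swap_id) auto

lemma word_perm_Nil [simp]: "word_perm [] = id"
  by (simp add: word_perm_def)

lemma word_perm_Cons [simp]: "word_perm (i # w) = adj i \<circ> word_perm w"
  by (simp add: word_perm_def)

lemma word_perm_append [simp]: "word_perm (xs @ ys) = word_perm xs \<circ> word_perm ys"
  by (induction xs) auto

lemma word_perm_snoc: "word_perm (w @ [i]) = word_perm w \<circ> adj i"
  by simp

lemma word_perm_rev_inverse: "word_perm w (word_perm (rev w) c) = c"
  by (induction w arbitrary: c rule: rev_induct) auto

lemma word_perm_permutes: "set w \<subseteq> {1..<n} \<Longrightarrow> word_perm w permutes {1..n}"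
proof (induction w)
  case (Cons i w)
  then have "word_perm w permutes {1..n}" "1 \<le> i" "i < n"
    by auto
  then show ?case
    unfolding word_perm_Cons by (intro permutes_compose permutes_adj)
qed simp

lemma word_perm_fixes: "\<forall>j\<in>set v. j \<noteq> c \<and> Suc j \<noteq> c \<Longrightarrow> word_perm v c = c"
  by (induction v) (auto simp: adj_def)

lemma word_perm_le: "set w \<subseteq> {..<p} \<Longrightarrow> c \<le> p \<Longrightarrow> word_perm w c \<le> p"
  by (induction w) (auto simp: adj_def)

lemma word_perm_ge: "\<forall>j\<in>set w. p \<le> j \<Longrightarrow> p \<le> c \<Longrightarrow> p \<le> word_perm w c"
  by (induction w) (auto simp: adj_def)

lemma word_perm_rev_filter:
  assumes fixes_R: "\<And>j v. \<not> Q j \<Longrightarrow> v \<in> R \<Longrightarrow> adj j v = v"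
    and stays: "\<And>u r. u @ r = filter Q ws \<Longrightarrow> word_perm (rev u) t \<in> R"
  shows "word_perm (rev ws) t = word_perm (rev (filter Q ws)) t"
  using stays
proof (induction ws rule: rev_induct)
  case (snoc j ws)
  then have IH: "word_perm (rev ws) t = word_perm (rev (filter Q ws)) t"
    by (metis append.assoc filter_append)
  show ?case
  proof (cases "Q j")
    case True
    then show ?thesis
      using IH by simp
  next
    case False
    then have "word_perm (rev (filter Q ws)) t \<in> R"
      using snoc.prems[of "filter Q ws" "[]"] by simp
    then show ?thesis
      using IH False fixes_R by simp
  qed
qed simp

section \<open>Inversions\<close>

definition inversions :: "nat \<Rightarrow> (nat \<Rightarrow> nat) \<Rightarrow> (nat \<times> nat) set" where
  "inversions n f = {(a, b). 1 \<le> a \<and> a < b \<and> b \<le> n \<and> f b < f a}"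

definition inv_count :: "nat \<Rightarrow> (nat \<Rightarrow> nat) \<Rightarrow> nat" where
  "inv_count n f = card (inversions n f)"

lemma finite_inversions [simp]: "finite (inversions n f)"
  by (rule finite_subset[of _ "{1..n} \<times> {1..n}"]) (auto simp: inversions_def)

lemma inv_count_id [simp]: "inv_count n id = 0"
proof -
  have "inversions n id = {}"
    by (auto simp: inversions_def)
  then show ?thesis
    by (simp add: inv_count_def)
qed

lemma inv_count_comp_adj:
  assumes f: "f permutes {1..n}" and i: "1 \<le> i" "i < n"
  shows "inv_count n (f \<circ> adj i) = (if f i < f (Suc i) then Suc (inv_count n f) else inv_count n f - 1)"
proof -
  let ?e = "(i, Suc i)"
  let ?swap = "\<lambda>(a, b). (adj i a, adj i b)"
  have swap_mem: "x \<in> inversions n (f \<circ> adj i) - {?e} \<longleftrightarrow> ?swap x \<in> inversions n f - {?e}" for x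
    using i by (cases x) (auto simp: inversions_def adj_def)
  have swap_swap: "?swap (?swap x) = x" for x
    by (cases x) simp
  have "inversions n (f \<circ> adj i) - {?e} = ?swap ` (inversions n f - {?e})"
  proof (rule set_eqI)
    fix x
    have "x \<in> ?swap ` (inversions n f - {?e}) \<longleftrightarrow> ?swap x \<in> inversions n f - {?e}"
      by (metis (no_types, lifting) imageE image_eqI swap_swap)
    then show "x \<in> inversions n (f \<circ> adj i) - {?e} \<longleftrightarrow> x \<in> ?swap ` (inversions n f - {?e})"
      using swap_mem by blast
  qed
  moreover have "inj ?swap"
    by (rule injI) (metis swap_swap)
  ultimately have same: "card (inversions n (f \<circ> adj i) - {?e}) = card (inversions n f - {?e})"
    by (simp add: card_image inj_on_subset)
  have "f i \<noteq> f (Suc i)"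
    using permutes_inj[OF f] by (metis inj_eq n_not_Suc_n)
  moreover have "?e \<in> inversions n (f \<circ> adj i) \<longleftrightarrow> f i < f (Suc i)"
    and "?e \<in> inversions n f \<longleftrightarrow> f (Suc i) < f i"
    using i by (auto simp: inversions_def adj_def)
  ultimately show ?thesis
    using same card.remove[of "inversions n f" ?e] card.remove[of "inversions n (f \<circ> adj i)" ?e]
    by (auto simp: inv_count_def)
qed

lemma inv_count_adj_comp:
  assumes h: "h permutes {1..n}" and ab: "1 \<le> a" "a < b" "b \<le> n" "h a = i" "h b = Suc i"
  shows "inv_count n (adj i \<circ> h) = Suc (inv_count n h)"
proof -
  have inj: "u = v" if "h u = h v" for u v
    using permutes_inj[OF h] that by (simp add: inj_eq)
  have "inversions n (adj i \<circ> h) = insert (a, b) (inversions n h)"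
  proof (rule set_eqI, clarify)
    fix x y
    show "(x, y) \<in> inversions n (adj i \<circ> h) \<longleftrightarrow> (x, y) \<in> insert (a, b) (inversions n h)"
    proof (cases "(x, y) = (a, b)")
      case True
      then show ?thesis
        using ab by (simp add: inversions_def adj_def)
    next
      case False
      have "adj i (h y) < adj i (h x) \<longleftrightarrow> h y < h x" if "x < y"
      proof -
        have "\<not> (h y = i \<and> h x = Suc i)"
          using that ab inj[of y a] inj[of x b] by auto
        moreover have "\<not> (h y = Suc i \<and> h x = i)"
          using False ab inj[of y b] inj[of x a] by auto
        ultimately show ?thesis
          by (auto simp: adj_def)
      qed
      then show ?thesis
        using False by (auto simp: inversions_def)
    qed
  qed
  moreover have "(a, b) \<notin> inversions n h"
    using ab by (simp add: inversions_def)
  ultimately show ?thesis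
    by (simp add: inv_count_def)
qed

lemma inv_count_word_perm_le: "set w \<subseteq> {1..<n} \<Longrightarrow> inv_count n (word_perm w) \<le> length w"
proof (induction w rule: rev_induct)
  case (snoc i w)
  then have w: "set w \<subseteq> {1..<n}" and "1 \<le> i" "i < n"
    by auto
  then have "inv_count n (word_perm w \<circ> adj i) \<le> Suc (inv_count n (word_perm w))"
    using inv_count_comp_adj[OF word_perm_permutes[OF w]] by auto
  then show ?case
    using snoc.IH[OF w] by (simp only: word_perm_snoc length_append_singleton)
qed simp

lemma permutes_ascending_eq_id:
  assumes f: "f permutes {1..n}" and asc: "\<And>i. 1 \<le> i \<Longrightarrow> i < n \<Longrightarrow> f i < f (Suc i)"
  shows "f = id"
proof (rule permutes_natset_ge[OF f], intro ballI)
  fix c assume "c \<in> {1..n}"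
  then show "c \<le> f c"
  proof (induction c)
    case (Suc c)
    show ?case
    proof (cases "c = 0")
      case True
      then show ?thesis
        using permutes_in_image[OF f, of 1] Suc.prems by auto
    next
      case False
      then show ?thesis
        using Suc asc[of c] by force
    qed
  qed simp
qed

lemma permutes_has_reduced_word:
  assumes "f permutes {1..n}"
  shows "\<exists>w. set w \<subseteq> {1..<n} \<and> word_perm w = f \<and> length w = inv_count n f"
  using assms
proof (induction "inv_count n f" arbitrary: f rule: less_induct)
  case less
  show ?case
  proof (cases "\<forall>i. 1 \<le> i \<and> i < n \<longrightarrow> f i < f (Suc i)")
    case True
    then show ?thesis
      using permutes_ascending_eq_id[OF less.prems] by (intro exI[of _ "[]"]) auto
  next
    case False
    then obtain i where i: "1 \<le> i" "i < n" "\<not> f i < f (Suc i)"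
      by blast
    define g where "g = f \<circ> adj i"
    have g: "g permutes {1..n}"
      unfolding g_def by (rule permutes_compose[OF permutes_adj[OF i(1,2)] less.prems])
    have "f i \<noteq> f (Suc i)"
      using permutes_inj[OF less.prems] by (metis inj_eq n_not_Suc_n)
    then have "g i < g (Suc i)"
      using i(3) by (simp add: g_def adj_def)
    moreover have f_eq: "f = g \<circ> adj i"
      by (simp add: g_def o_assoc[symmetric])
    ultimately have "inv_count n f = Suc (inv_count n g)"
      using inv_count_comp_adj[OF g i(1,2)] by simp
    then obtain w where "set w \<subseteq> {1..<n}" "word_perm w = g" "length w = inv_count n g"
      using less.hyps[of g] g by auto
    then show ?thesis
      using i f_eq \<open>inv_count n f = Suc (inv_count n g)\<close> by (intro exI[of _ "w @ [i]"]) auto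
  qed
qed

lemma inv_count_comp_word_perm_le:
  assumes g: "g permutes {1..n}" and ys: "set ys \<subseteq> {1..<n}"
  shows "inv_count n (g \<circ> word_perm ys) \<le> inv_count n g + length ys"
  using ys
proof (induction ys rule: rev_induct)
  case (snoc i ys)
  then have ys: "set ys \<subseteq> {1..<n}" and "1 \<le> i" "i < n"
    by auto
  moreover have "g \<circ> word_perm ys permutes {1..n}"
    using permutes_compose[OF word_perm_permutes[OF ys] g] .
  ultimately have "inv_count n (g \<circ> word_perm ys \<circ> adj i) \<le> Suc (inv_count n (g \<circ> word_perm ys))"
    using inv_count_comp_adj by auto
  moreover have "g \<circ> word_perm (ys @ [i]) = g \<circ> word_perm ys \<circ> adj i"
    by (simp only: word_perm_snoc o_assoc)
  ultimately show ?case
    using snoc.IH[OF ys] by (simp only: length_append_singleton)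
qed simp

lemma inv_count_permutes_mono:
  assumes g: "g permutes {1..m}" and "m \<le> N"
  shows "inv_count N g = inv_count m g"
proof -
  have bounded: "b \<le> m" if "1 \<le> a" "a < b" "g b < g a" for a b
  proof (rule ccontr)
    assume "\<not> b \<le> m"
    then have "g b = b"
      by (simp add: permutes_not_in[OF g])
    moreover have "g a \<le> max a m"
      using permutes_in_image[OF g, of a] permutes_not_in[OF g, of a] by (cases "a \<le> m") auto
    ultimately show False
      using that \<open>\<not> b \<le> m\<close> by simp
  qed
  then have "inversions N g = inversions m g"
    unfolding inversions_def using bounded \<open>m \<le> N\<close> by (fastforce intro: order.trans)
  then show ?thesis
    by (simp add: inv_count_def)
qed

section \<open>Reduced words\<close>

definition red_words :: "nat \<Rightarrow> (nat \<Rightarrow> nat) \<Rightarrow> nat list set" where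
  "red_words n f = {w. set w \<subseteq> {1..<n} \<and> word_perm w = f \<and> length w = inv_count n f}"

lemma red_words_permutes: "w \<in> red_words n f \<Longrightarrow> f permutes {1..n}"
  unfolding red_words_def using word_perm_permutes by blast

lemma red_wordsI:
  "set w \<subseteq> {1..<n} \<Longrightarrow> word_perm w = f \<Longrightarrow> length w \<le> inv_count n f \<Longrightarrow> w \<in> red_words n f"
  using inv_count_word_perm_le[of w n] by (auto simp: red_words_def)

lemma red_words_nonempty: "f permutes {1..n} \<Longrightarrow> red_words n f \<noteq> {}"
  using permutes_has_reduced_word by (auto simp: red_words_def)

lemma red_words_id [simp]: "red_words n id = {[]}"
  by (auto simp: red_words_def)

lemma finite_red_words [simp]: "finite (red_words n f)"
  by (rule finite_subset[of _ "{w. set w \<subseteq> {1..<n} \<and> length w = inv_count n f}"])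
     (auto simp: red_words_def finite_lists_length_eq)

lemma snoc_in_red_words_iff:
  "w @ [i] \<in> red_words n f \<longleftrightarrow> 1 \<le> i \<and> i < n \<and> f (Suc i) < f i \<and> w \<in> red_words n (f \<circ> adj i)"
proof
  assume red: "w @ [i] \<in> red_words n f"
  then have w: "set w \<subseteq> {1..<n}" and i: "1 \<le> i" "i < n" and f: "f = word_perm w \<circ> adj i"
    and len: "Suc (length w) = inv_count n f"
    by (auto simp: red_words_def word_perm_snoc)
  have "inv_count n (word_perm w) \<le> length w"
    by (rule inv_count_word_perm_le[OF w])
  then have asc: "word_perm w i < word_perm w (Suc i)" and "inv_count n (word_perm w) = length w"
    using inv_count_comp_adj[OF word_perm_permutes[OF w] i] f len by (auto split: if_splits)
  moreover have "f \<circ> adj i = word_perm w"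
    using f by simp
  ultimately show "1 \<le> i \<and> i < n \<and> f (Suc i) < f i \<and> w \<in> red_words n (f \<circ> adj i)"
    using w i f by (auto simp: red_words_def adj_def)
next
  assume "1 \<le> i \<and> i < n \<and> f (Suc i) < f i \<and> w \<in> red_words n (f \<circ> adj i)"
  then have i: "1 \<le> i" "i < n" and desc: "f (Suc i) < f i" and w: "w \<in> red_words n (f \<circ> adj i)"
    by auto
  have "inv_count n f = Suc (inv_count n (f \<circ> adj i))"
    using inv_count_comp_adj[OF red_words_permutes[OF w] i] desc by (simp add: adj_def)
  then show "w @ [i] \<in> red_words n f"
    using w i by (auto simp: red_words_def word_perm_snoc)
qed

lemma exists_red_word_ending:
  assumes "f permutes {1..n}" "1 \<le> i" "i < n" "f (Suc i) < f i"
  obtains z where "z @ [i] \<in> red_words n f"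
proof -
  obtain z where "z \<in> red_words n (f \<circ> adj i)"
    using red_words_nonempty[OF permutes_compose[OF permutes_adj assms(1)]] assms(2,3) by blast
  then show thesis
    using that assms by (simp add: snoc_in_red_words_iff)
qed

lemma red_words_prefix:
  assumes "xs @ ys \<in> red_words n f"
  shows "xs \<in> red_words n (word_perm xs)"
proof -
  from assms have xs: "set xs \<subseteq> {1..<n}" and ys: "set ys \<subseteq> {1..<n}"
    and "word_perm xs \<circ> word_perm ys = f" and "length xs + length ys = inv_count n f"
    by (auto simp: red_words_def)
  then have "length xs \<le> inv_count n (word_perm xs)"
    using inv_count_comp_word_perm_le[OF word_perm_permutes[OF xs] ys] by simp
  then show ?thesis
    using red_wordsI[OF xs] by simp
qed

lemma red_words_mono:
  assumes "g permutes {1..m}" "set y \<subseteq> {1..<m}" "m \<le> N"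
  shows "y \<in> red_words N g \<longleftrightarrow> y \<in> red_words m g"
  using inv_count_permutes_mono[OF assms(1,3)] assms(2,3) by (auto simp: red_words_def)

lemma append_in_red_words_iff:
  assumes x: "set x \<subseteq> {1..<n}" and count: "inv_count n (word_perm x \<circ> g) = length x + inv_count n g"
  shows "x @ y \<in> red_words n (word_perm x \<circ> g) \<longleftrightarrow> y \<in> red_words n g"
proof -
  have "inj (word_perm x)"
    using permutes_inj[OF word_perm_permutes[OF x]] .
  then have "word_perm x \<circ> word_perm y = word_perm x \<circ> g \<longleftrightarrow> word_perm y = g"
    by (metis fun.inj_map_strong inj_eq)
  then show ?thesis
    using x count by (auto simp: red_words_def)
qed

lemma commute_in_red_words:
  assumes "Suc i < j \<or> Suc j < i" "z @ [i, j] \<in> red_words n f"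
  shows "z @ [j, i] \<in> red_words n f"
  using assms adj_comp_commute[OF assms(1)] by (auto simp: red_words_def)

lemma braid_in_red_words:
  assumes "j = Suc i \<or> i = Suc j" "z @ [i, j, i] \<in> red_words n f"
  shows "z @ [j, i, j] \<in> red_words n f"
proof -
  have "word_perm [i, j, i] = word_perm [j, i, j]"
    using adj_braid[OF assms(1)] by auto
  then show ?thesis
    using assms(2) by (auto simp: red_words_def simp del: word_perm_Cons)
qed

lemma double_letter_not_in_red_words: "z @ [i, i] \<notin> red_words n f"
proof
  assume "z @ [i, i] \<in> red_words n f"
  then have "f (Suc i) < f i" "(f \<circ> adj i) (Suc i) < (f \<circ> adj i) i"
    using snoc_in_red_words_iff[of "z @ [i]"] snoc_in_red_words_iff[of z] by auto
  then show False
    by (simp add: adj_def)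
qed

(* word_perm (rev u) p is the position of the value p in the one-line notation of word_perm u;
   along a reduced word the largest value only moves left and the smallest only moves right. *)

lemma red_word_position_of_max_stays_left:
  assumes "u @ v \<in> red_words n g" "set (u @ v) \<subseteq> {..<p}" "word_perm (rev u) p < p"
  shows "word_perm (rev (u @ v)) p < p"
  using assms
proof (induction v arbitrary: g rule: rev_induct)
  case (snoc j v)
  let ?W = "word_perm (u @ v)" and ?t = "word_perm (rev (u @ v)) p"
  have red: "(u @ v) @ [j] \<in> red_words n g"
    using snoc.prems(1) by simp
  then have "u @ v \<in> red_words n ?W"
    by (rule red_words_prefix)
  then have t: "?t < p"
    using snoc by simp
  have j: "j < p"
    using snoc.prems(2) by simp
  have "g (Suc j) < g j" "u @ v \<in> red_words n (g \<circ> adj j)"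
    using red unfolding snoc_in_red_words_iff by auto
  then have "?W j < ?W (Suc j)"
    by (simp add: red_words_def adj_def)
  moreover have "?W ?t = p"
    by (rule word_perm_rev_inverse)
  moreover have "?W p \<le> p"
    using snoc.prems(2) by (intro word_perm_le) auto
  ultimately have "\<not> (j = ?t \<and> Suc j = p)"
    by auto
  then show ?case
    using t j by (auto simp: adj_def)
qed simp

lemma red_word_position_of_min_stays_right:
  assumes "u @ v \<in> red_words n g" "\<forall>j\<in>set (u @ v). p \<le> j" "p < word_perm (rev u) p"
  shows "p < word_perm (rev (u @ v)) p"
  using assms
proof (induction v arbitrary: g rule: rev_induct)
  case (snoc j v)
  let ?W = "word_perm (u @ v)" and ?t = "word_perm (rev (u @ v)) p"
  have red: "(u @ v) @ [j] \<in> red_words n g"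
    using snoc.prems(1) by simp
  then have "u @ v \<in> red_words n ?W"
    by (rule red_words_prefix)
  then have t: "p < ?t"
    using snoc by simp
  have j: "p \<le> j"
    using snoc.prems(2) by simp
  have "g (Suc j) < g j" "u @ v \<in> red_words n (g \<circ> adj j)"
    using red unfolding snoc_in_red_words_iff by auto
  then have "?W j < ?W (Suc j)"
    by (simp add: red_words_def adj_def)
  moreover have "?W ?t = p"
    by (rule word_perm_rev_inverse)
  moreover have "p \<le> ?W p"
    using snoc.prems(2) by (intro word_perm_ge) auto
  ultimately have "\<not> (j = p \<and> ?t = Suc p)"
    by auto
  then show ?case
    using t j by (auto simp: adj_def)
qed simp

section \<open>Shuffles of reduced words\<close>

definition red_shuffle :: "nat \<Rightarrow> (nat \<Rightarrow> bool) \<Rightarrow> (nat \<Rightarrow> nat) \<Rightarrow> (nat \<Rightarrow> nat) \<Rightarrow> nat list \<Rightarrow> bool" where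
  "red_shuffle n P \<alpha> \<beta> w \<longleftrightarrow> filter P w \<in> red_words n \<alpha> \<and> filter (\<lambda>x. \<not> P x) w \<in> red_words n \<beta>"

lemma red_shuffle_letters: "red_shuffle n P \<alpha> \<beta> w \<Longrightarrow> set w \<subseteq> {1..<n}"
  by (auto simp: red_shuffle_def red_words_def)

lemma red_shuffle_swap: "red_shuffle n (\<lambda>x. \<not> P x) \<beta> \<alpha> = red_shuffle n P \<alpha> \<beta>"
  by (auto simp: red_shuffle_def)

lemma red_shuffle_snoc_left:
  "P j \<Longrightarrow> red_shuffle n P \<alpha> \<beta> (y @ [j]) \<longleftrightarrow>
     1 \<le> j \<and> j < n \<and> \<alpha> (Suc j) < \<alpha> j \<and> red_shuffle n P (\<alpha> \<circ> adj j) \<beta> y"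
  by (auto simp: red_shuffle_def snoc_in_red_words_iff)

lemma red_shuffle_snoc_right:
  "\<not> P j \<Longrightarrow> red_shuffle n P \<alpha> \<beta> (y @ [j]) \<longleftrightarrow>
     1 \<le> j \<and> j < n \<and> \<beta> (Suc j) < \<beta> j \<and> red_shuffle n P \<alpha> (\<beta> \<circ> adj j) y"
  by (auto simp: red_shuffle_def snoc_in_red_words_iff)

lemma red_shuffle_commute:
  assumes "Suc i < j \<or> Suc j < i" "red_shuffle n P \<alpha> \<beta> (z @ [i, j])"
  shows "red_shuffle n P \<alpha> \<beta> (z @ [j, i])"
  using assms commute_in_red_words[OF assms(1), of "filter P z"]
    commute_in_red_words[OF assms(1), of "filter (\<lambda>x. \<not> P x) z"]
  by (auto simp: red_shuffle_def)

lemma red_shuffle_braid: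
  assumes "j = Suc i \<or> i = Suc j" "red_shuffle n P \<alpha> \<beta> (z @ [i, j, i])"
  shows "red_shuffle n P \<alpha> \<beta> (z @ [j, i, j])"
  using assms braid_in_red_words[OF assms(1), of "filter P z"]
    braid_in_red_words[OF assms(1), of "filter (\<lambda>x. \<not> P x) z"]
    double_letter_not_in_red_words[of "filter P z" i] double_letter_not_in_red_words[of "filter (\<lambda>x. \<not> P x) z" i]
  by (auto simp: red_shuffle_def split: if_splits)

(* The induction hypothesis of red_shuffle_closed, for all words shorter than k. *)

context
  fixes n k :: nat
  assumes closed_below: "\<And>P \<alpha> \<beta> v. length v < k \<Longrightarrow> red_shuffle n P \<alpha> \<beta> v \<Longrightarrow>
    v \<in> red_words n (word_perm v) \<and> red_words n (word_perm v) \<subseteq> Collect (red_shuffle n P \<alpha> \<beta>)"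
begin

lemma red_shuffle_transfer:
  assumes "length v < k" "v @ [j] \<in> red_words n \<pi>" "red_shuffle n P \<alpha> \<beta> (v @ [j])"
    and "y @ [j] \<in> red_words n \<pi>"
  shows "red_shuffle n P \<alpha> \<beta> (y @ [j])"
proof -
  have "v \<in> red_words n (\<pi> \<circ> adj j)" "y \<in> red_words n (\<pi> \<circ> adj j)"
    using assms(2,4) by (simp_all add: snoc_in_red_words_iff)
  then have y: "y \<in> red_words n (word_perm v)"
    by (simp add: red_words_def)
  show ?thesis
  proof (cases "P j")
    case True
    then have "red_shuffle n P (\<alpha> \<circ> adj j) \<beta> y"
      using closed_below[OF assms(1)] assms(3) y by (auto simp: red_shuffle_snoc_left)
    then show ?thesis
      using True assms(3) by (simp add: red_shuffle_snoc_left)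
  next
    case False
    then have "red_shuffle n P \<alpha> (\<beta> \<circ> adj j) y"
      using closed_below[OF assms(1)] assms(3) y by (auto simp: red_shuffle_snoc_right)
    then show ?thesis
      using False assms(3) by (simp add: red_shuffle_snoc_right)
  qed
qed

(* Every reduced word y @ [j] of word_perm (w @ [i]) is compared with w @ [i] through a reduced
   word v @ [j] obtained from w @ [i] by a commutation or braid move at the end. *)

context
  fixes P \<alpha> \<beta> w i
  assumes shorter: "length w < k" and P_last: "P i" and shuffle: "red_shuffle n P \<alpha> \<beta> (w @ [i])"
begin

lemma butlast_red_shuffle: "1 \<le> i" "i < n" "\<alpha> (Suc i) < \<alpha> i" "red_shuffle n P (\<alpha> \<circ> adj i) \<beta> w"
  using shuffle P_last by (simp_all add: red_shuffle_snoc_left)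

lemma butlast_red_words: "w \<in> red_words n (word_perm w)"
  and red_words_butlast_shuffle: "red_words n (word_perm w) \<subseteq> Collect (red_shuffle n P (\<alpha> \<circ> adj i) \<beta>)"
  using closed_below[OF shorter butlast_red_shuffle(4)] by auto

lemma snoc_red_words: "w @ [i] \<in> red_words n (word_perm (w @ [i]))"
proof -
  have w_perm: "word_perm w permutes {1..n}"
    using red_words_permutes[OF butlast_red_words] .
  have "word_perm w i < word_perm w (Suc i)"
  proof (rule ccontr)
    assume "\<not> word_perm w i < word_perm w (Suc i)"
    moreover have "word_perm w i \<noteq> word_perm w (Suc i)"
      using permutes_inj[OF w_perm] by (metis inj_eq n_not_Suc_n)
    ultimately obtain z where "z @ [i] \<in> red_words n (word_perm w)"
      using exists_red_word_ending[OF w_perm butlast_red_shuffle(1,2)] by force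
    then have "red_shuffle n P (\<alpha> \<circ> adj i) \<beta> (z @ [i])"
      using red_words_butlast_shuffle by auto
    then have "(\<alpha> \<circ> adj i) (Suc i) < (\<alpha> \<circ> adj i) i"
      using P_last by (simp add: red_shuffle_snoc_left)
    then show False
      using butlast_red_shuffle(3) by (simp add: adj_def)
  qed
  then show ?thesis
    using butlast_red_words butlast_red_shuffle(1,2) by (simp add: snoc_in_red_words_iff adj_def)
qed

lemma commuting_red_shuffle_ending:
  assumes far: "Suc i < j \<or> Suc j < i" and j: "1 \<le> j" "j < n"
    and desc: "word_perm (w @ [i]) (Suc j) < word_perm (w @ [i]) j"
  obtains v where "v @ [j] \<in> red_words n (word_perm (w @ [i]))" "red_shuffle n P \<alpha> \<beta> (v @ [j])"
    "length v = length w"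
proof -
  have "word_perm w (Suc j) < word_perm w j"
    using far desc by (auto simp: adj_def)
  then obtain z where z: "z @ [j] \<in> red_words n (word_perm w)"
    using exists_red_word_ending[OF red_words_permutes[OF butlast_red_words] j] by blast
  then have z_ji: "z @ [j, i] \<in> red_words n (word_perm (w @ [i]))"
    using snoc_red_words snoc_in_red_words_iff[of "z @ [j]"] snoc_in_red_words_iff[of w] by auto
  have "red_shuffle n P (\<alpha> \<circ> adj i) \<beta> (z @ [j])"
    using z red_words_butlast_shuffle by auto
  with butlast_red_shuffle(1-3) have "red_shuffle n P \<alpha> \<beta> ((z @ [j]) @ [i])"
    by (simp only: red_shuffle_snoc_left[where P = P and j = i, OF P_last])
  then have shuffle_ji: "red_shuffle n P \<alpha> \<beta> (z @ [j, i])"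
    by simp
  have far': "Suc j < i \<or> Suc i < j"
    using far by auto
  show thesis
  proof (rule that)
    show "(z @ [i]) @ [j] \<in> red_words n (word_perm (w @ [i]))"
      using commute_in_red_words[OF far' z_ji] by simp
    show "red_shuffle n P \<alpha> \<beta> ((z @ [i]) @ [j])"
      using red_shuffle_commute[OF far' shuffle_ji] by simp
    show "length (z @ [i]) = length w"
      using z_ji snoc_red_words by (simp add: red_words_def)
  qed
qed

lemma braid_red_shuffle_ending:
  assumes adjacent: "j = Suc i \<or> i = Suc j" and j: "1 \<le> j" "j < n"
    and desc: "word_perm (w @ [i]) (Suc j) < word_perm (w @ [i]) j"
  obtains v where "v @ [j] \<in> red_words n (word_perm (w @ [i]))" "red_shuffle n P \<alpha> \<beta> (v @ [j])"
    "length v = length w"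
proof -
  let ?\<pi> = "word_perm (w @ [i])"
  have desc_i: "?\<pi> (Suc i) < ?\<pi> i"
    using snoc_red_words by (simp add: snoc_in_red_words_iff)
  have desc_j': "(?\<pi> \<circ> adj i) (Suc j) < (?\<pi> \<circ> adj i) j"
    and desc_i': "(?\<pi> \<circ> adj i \<circ> adj j) (Suc i) < (?\<pi> \<circ> adj i \<circ> adj j) i"
    using adjacent desc desc_i by (auto simp: adj_def)
  have "?\<pi> \<circ> adj i \<circ> adj j permutes {1..n}"
    using permutes_compose[OF permutes_adj[OF j] permutes_compose[OF permutes_adj[OF butlast_red_shuffle(1,2)]
        red_words_permutes[OF snoc_red_words]]] .
  then obtain z where "z @ [i] \<in> red_words n (?\<pi> \<circ> adj i \<circ> adj j)"
    using exists_red_word_ending butlast_red_shuffle(1,2) desc_i' by blast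
  then have z: "z @ [i, j] \<in> red_words n (word_perm w)"
    using snoc_in_red_words_iff[of "z @ [i]"] desc_j' j by simp
  then have z_iji: "z @ [i, j, i] \<in> red_words n ?\<pi>"
    using snoc_in_red_words_iff[of "z @ [i, j]"] desc_i butlast_red_shuffle(1,2) by simp
  have "red_shuffle n P (\<alpha> \<circ> adj i) \<beta> (z @ [i, j])"
    using z red_words_butlast_shuffle by auto
  with butlast_red_shuffle(1-3) have "red_shuffle n P \<alpha> \<beta> ((z @ [i, j]) @ [i])"
    by (simp only: red_shuffle_snoc_left[where P = P and j = i, OF P_last])
  then have shuffle_iji: "red_shuffle n P \<alpha> \<beta> (z @ [i, j, i])"
    by simp
  show thesis
  proof (rule that)
    show "(z @ [j, i]) @ [j] \<in> red_words n ?\<pi>"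
      using braid_in_red_words[OF adjacent z_iji] by simp
    show "red_shuffle n P \<alpha> \<beta> ((z @ [j, i]) @ [j])"
      using red_shuffle_braid[OF adjacent shuffle_iji] by simp
    show "length (z @ [j, i]) = length w"
      using z_iji snoc_red_words by (simp add: red_words_def)
  qed
qed

lemma red_shuffle_word_ending_in:
  assumes j: "1 \<le> j" "j < n" and desc: "word_perm (w @ [i]) (Suc j) < word_perm (w @ [i]) j"
  obtains v where "v @ [j] \<in> red_words n (word_perm (w @ [i]))" "red_shuffle n P \<alpha> \<beta> (v @ [j])"
    "length v = length w"
proof (cases "j = i")
  case True
  then show thesis
    using that snoc_red_words shuffle by blast
next
  case False
  then consider "Suc i < j \<or> Suc j < i" | "j = Suc i \<or> i = Suc j"
    by linarith
  then show thesis
  proof cases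
    case 1
    then show thesis
      using commuting_red_shuffle_ending[OF 1 j desc] that by blast
  next
    case 2
    then show thesis
      using braid_red_shuffle_ending[OF 2 j desc] that by blast
  qed
qed

lemma red_shuffle_step:
  "w @ [i] \<in> red_words n (word_perm (w @ [i])) \<and>
   red_words n (word_perm (w @ [i])) \<subseteq> Collect (red_shuffle n P \<alpha> \<beta>)"
proof -
  have "red_shuffle n P \<alpha> \<beta> y" if y: "y \<in> red_words n (word_perm (w @ [i]))" for y
  proof -
    have "length y = length (w @ [i])"
      using y snoc_red_words by (simp add: red_words_def)
    then obtain y' j where y': "y = y' @ [j]"
      by (cases y rule: rev_exhaust) auto
    then have "1 \<le> j" "j < n" "word_perm (w @ [i]) (Suc j) < word_perm (w @ [i]) j"
      using y by (simp_all add: snoc_in_red_words_iff)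
    then obtain v where v: "v @ [j] \<in> red_words n (word_perm (w @ [i]))" "red_shuffle n P \<alpha> \<beta> (v @ [j])"
      "length v = length w"
      by (rule red_shuffle_word_ending_in)
    have "length v < k"
      using v(3) shorter by simp
    then show ?thesis
      using red_shuffle_transfer[OF _ v(1,2)] y y' by blast
  qed
  then show ?thesis
    using snoc_red_words by blast
qed

end

end

theorem red_shuffle_closed:
  "red_shuffle n P \<alpha> \<beta> w \<Longrightarrow>
    w \<in> red_words n (word_perm w) \<and> red_words n (word_perm w) \<subseteq> Collect (red_shuffle n P \<alpha> \<beta>)"
proof (induction "length w" arbitrary: P \<alpha> \<beta> w rule: less_induct)
  case less
  show ?case
  proof (cases w rule: rev_exhaust)
    case Nil
    then have "\<alpha> = id" "\<beta> = id"
      using less.prems by (auto simp: red_shuffle_def red_words_def)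
    then show ?thesis
      using Nil by (simp add: red_shuffle_def)
  next
    case (snoc w' i)
    then have shorter: "length w' < length w"
      by simp
    show ?thesis
    proof (cases "P i")
      case True
      then show ?thesis
        using red_shuffle_step[where k = "length w" and w = w' and P = P, OF less.hyps shorter True] less.prems snoc
        by blast
    next
      case False
      have "red_shuffle n (\<lambda>x. \<not> P x) \<beta> \<alpha> (w' @ [i])"
        using less.prems snoc by (simp add: red_shuffle_swap)
      then show ?thesis
        using red_shuffle_step[where k = "length w" and w = w' and P = "\<lambda>x. \<not> P x"
            and \<alpha> = \<beta> and \<beta> = \<alpha>, OF less.hyps shorter] False snoc
        by (simp add: red_shuffle_swap)
    qed
  qed
qed

definition red_shuffle_perms :: "nat \<Rightarrow> (nat \<Rightarrow> bool) \<Rightarrow> (nat \<Rightarrow> nat) \<Rightarrow> (nat \<Rightarrow> nat) \<Rightarrow> (nat \<Rightarrow> nat) set" where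
  "red_shuffle_perms n P \<alpha> \<beta> = word_perm ` {w. red_shuffle n P \<alpha> \<beta> w}"

lemma red_shuffle_perms_transfer:
  assumes shuffle_iff: "\<And>z. set z \<subseteq> {1..<m} \<Longrightarrow> red_shuffle N P \<alpha> \<beta> (x @ map \<phi> z) \<longleftrightarrow> red_shuffle m Q \<gamma> \<delta> z"
    and perm_eq: "\<And>z. set z \<subseteq> {1..<m} \<Longrightarrow> word_perm (x @ map \<phi> z) = c \<circ> \<Phi> (word_perm z)"
    and red_iff: "\<And>y. set y \<subseteq> {1..<m} \<Longrightarrow> x @ map \<phi> y \<in> red_words N (c \<circ> \<Phi> \<sigma>) \<longleftrightarrow> y \<in> red_words m \<sigma>"
    and \<sigma>: "\<sigma> permutes {1..m}"
  shows "c \<circ> \<Phi> \<sigma> \<in> red_shuffle_perms N P \<alpha> \<beta> \<longleftrightarrow> \<sigma> \<in> red_shuffle_perms m Q \<gamma> \<delta>"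
proof
  assume "c \<circ> \<Phi> \<sigma> \<in> red_shuffle_perms N P \<alpha> \<beta>"
  then obtain w where w: "red_shuffle N P \<alpha> \<beta> w" "word_perm w = c \<circ> \<Phi> \<sigma>"
    by (auto simp: red_shuffle_perms_def)
  obtain y where y: "y \<in> red_words m \<sigma>"
    using red_words_nonempty[OF \<sigma>] by blast
  then have letters: "set y \<subseteq> {1..<m}"
    by (simp add: red_words_def)
  then have "x @ map \<phi> y \<in> red_words N (word_perm w)"
    using red_iff y w(2) by simp
  then have "red_shuffle m Q \<gamma> \<delta> y"
    using red_shuffle_closed[OF w(1)] shuffle_iff[OF letters] by blast
  then show "\<sigma> \<in> red_shuffle_perms m Q \<gamma> \<delta>"
    using y by (auto simp: red_shuffle_perms_def red_words_def)
next
  assume "\<sigma> \<in> red_shuffle_perms m Q \<gamma> \<delta>"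
  then obtain z where z: "red_shuffle m Q \<gamma> \<delta> z" "word_perm z = \<sigma>"
    by (auto simp: red_shuffle_perms_def)
  then show "c \<circ> \<Phi> \<sigma> \<in> red_shuffle_perms N P \<alpha> \<beta>"
    using shuffle_iff perm_eq red_shuffle_letters[OF z(1)] unfolding red_shuffle_perms_def by force
qed

lemma red_shuffle_perms_id:
  assumes P: "\<And>x. 1 \<le> x \<Longrightarrow> x < n \<Longrightarrow> P x" and \<alpha>: "\<alpha> permutes {1..n}"
  shows "red_shuffle_perms n P \<alpha> id = {\<alpha>}"
proof -
  have "red_shuffle n P \<alpha> id w \<longleftrightarrow> w \<in> red_words n \<alpha>" for w
  proof
    assume w: "red_shuffle n P \<alpha> id w"
    then have "filter (\<lambda>x. \<not> P x) w = []"
      by (simp add: red_shuffle_def)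
    then have "filter P w = w"
      by (simp add: filter_empty_conv)
    then show "w \<in> red_words n \<alpha>"
      using w by (simp add: red_shuffle_def)
  next
    assume w: "w \<in> red_words n \<alpha>"
    then have "\<forall>x\<in>set w. P x"
      using P by (auto simp: red_words_def)
    then show "red_shuffle n P \<alpha> id w"
      using w by (simp add: red_shuffle_def)
  qed
  then have "red_shuffle_perms n P \<alpha> id = word_perm ` red_words n \<alpha>"
    by (simp add: red_shuffle_perms_def)
  also have "\<dots> = {\<alpha>}"
    using red_words_nonempty[OF \<alpha>] by (auto simp: red_words_def)
  finally show ?thesis .
qed

section \<open>Counting shuffles\<close>

lemma filter_partition_eq_shuffles:
  assumes "set u \<subseteq> {x. P x}" "set v \<subseteq> {x. \<not> P x}"
  shows "{w. filter P w = u \<and> filter (\<lambda>x. \<not> P x) w = v} = shuffles u v"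
proof (intro set_eqI iffI)
  fix w
  assume "w \<in> shuffles u v"
  then have "filter P w \<in> shuffles (filter P u) (filter P v)"
    and "filter (\<lambda>x. \<not> P x) w \<in> shuffles (filter (\<lambda>x. \<not> P x) u) (filter (\<lambda>x. \<not> P x) v)"
    by (auto simp flip: filter_shuffles)
  moreover have "filter P u = u" "filter P v = []" "filter (\<lambda>x. \<not> P x) u = []" "filter (\<lambda>x. \<not> P x) v = v"
    using assms by (auto simp: filter_id_conv filter_empty_conv)
  ultimately show "w \<in> {w. filter P w = u \<and> filter (\<lambda>x. \<not> P x) w = v}"
    by simp
qed (use partition_in_shuffles in blast)

lemma card_filter_partition:
  assumes U: "finite U" "U \<subseteq> lists {x. P x}" "\<And>u. u \<in> U \<Longrightarrow> length u = a"
    and V: "finite V" "V \<subseteq> lists {x. \<not> P x}" "\<And>v. v \<in> V \<Longrightarrow> length v = b"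
  shows "card {w. filter P w \<in> U \<and> filter (\<lambda>x. \<not> P x) w \<in> V} = ((a + b) choose a) * card U * card V"
proof -
  have filters: "filter P w = u \<and> filter (\<lambda>x. \<not> P x) w = v" if "w \<in> shuffles u v" "(u, v) \<in> U \<times> V" for w u v
    using that U(2) V(2) filter_partition_eq_shuffles[of u P v] by auto
  have "{w. filter P w \<in> U \<and> filter (\<lambda>x. \<not> P x) w \<in> V} = (\<Union>uv\<in>U \<times> V. shuffles (fst uv) (snd uv))"
  proof (intro set_eqI iffI)
    fix w
    assume "w \<in> (\<Union>uv\<in>U \<times> V. shuffles (fst uv) (snd uv))"
    then show "w \<in> {w. filter P w \<in> U \<and> filter (\<lambda>x. \<not> P x) w \<in> V}"
      using filters by force
  qed (use partition_in_shuffles in force)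
  also have "card \<dots> = (\<Sum>uv\<in>U \<times> V. card (shuffles (fst uv) (snd uv)))"
  proof (rule card_UN_disjoint)
    show "\<forall>i\<in>U \<times> V. \<forall>j\<in>U \<times> V. i \<noteq> j \<longrightarrow> shuffles (fst i) (snd i) \<inter> shuffles (fst j) (snd j) = {}"
      using filters by (metis disjoint_iff prod.collapse)
  qed (use U V in auto)
  also have "\<dots> = (\<Sum>uv\<in>U \<times> V. (a + b) choose a)"
  proof (rule sum.cong)
    fix uv
    assume "uv \<in> U \<times> V"
    then have "set (fst uv) \<inter> set (snd uv) = {}" "length (fst uv) = a" "length (snd uv) = b"
      using U V by (fastforce simp: subset_iff)+
    then show "card (shuffles (fst uv) (snd uv)) = (a + b) choose a"
      using card_disjoint_shuffles by metis
  qed simp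
  also have "\<dots> = ((a + b) choose a) * card U * card V"
    by (simp add: card_cartesian_product)
  finally show ?thesis .
qed

lemma card_red_shuffles:
  "card {w. red_shuffle n P \<alpha> \<beta> w} =
     ((inv_count n \<alpha> + inv_count n \<beta>) choose inv_count n \<alpha>)
     * card (red_words n \<alpha> \<inter> lists {x. P x}) * card (red_words n \<beta> \<inter> lists {x. \<not> P x})"
proof -
  have "{w. red_shuffle n P \<alpha> \<beta> w} =
      {w. filter P w \<in> red_words n \<alpha> \<inter> lists {x. P x} \<and>
          filter (\<lambda>x. \<not> P x) w \<in> red_words n \<beta> \<inter> lists {x. \<not> P x}}"
    by (auto simp: red_shuffle_def)
  also have "card \<dots> = ((inv_count n \<alpha> + inv_count n \<beta>) choose inv_count n \<alpha>)
     * card (red_words n \<alpha> \<inter> lists {x. P x}) * card (red_words n \<beta> \<inter> lists {x. \<not> P x})"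
    by (rule card_filter_partition) (simp_all, auto simp: red_words_def)
  finally show ?thesis .
qed

lemma finite_red_shuffles: "finite {w. red_shuffle n P \<alpha> \<beta> w}"
proof (rule finite_subset)
  show "{w. red_shuffle n P \<alpha> \<beta> w} \<subseteq> {w. set w \<subseteq> {1..<n} \<and> length w = inv_count n \<alpha> + inv_count n \<beta>}"
  proof clarify
    fix w
    assume w: "red_shuffle n P \<alpha> \<beta> w"
    then have "length (filter P w) = inv_count n \<alpha>" "length (filter (\<lambda>x. \<not> P x) w) = inv_count n \<beta>"
      by (simp_all add: red_shuffle_def red_words_def)
    then show "set w \<subseteq> {1..<n} \<and> length w = inv_count n \<alpha> + inv_count n \<beta>"
      using red_shuffle_letters[OF w] sum_length_filter_compl[of P w] by simp
  qed
qed (simp add: finite_lists_length_eq)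

lemma sum_card_red_words_red_shuffles:
  "(\<Sum>f\<in>red_shuffle_perms n P \<alpha> \<beta>. card (red_words n f)) = card {w. red_shuffle n P \<alpha> \<beta> w}"
proof -
  let ?S = "{w. red_shuffle n P \<alpha> \<beta> w}"
  have "card ?S = card (\<Union>f\<in>word_perm ` ?S. red_words n f)"
  proof (rule arg_cong[where f = card], intro equalityI subsetI)
    fix w
    assume "w \<in> ?S"
    then show "w \<in> (\<Union>f\<in>word_perm ` ?S. red_words n f)"
      using red_shuffle_closed[of n P \<alpha> \<beta> w] by blast
  next
    fix y
    assume "y \<in> (\<Union>f\<in>word_perm ` ?S. red_words n f)"
    then obtain w where "red_shuffle n P \<alpha> \<beta> w" "y \<in> red_words n (word_perm w)"
      by blast
    then show "y \<in> ?S"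
      using red_shuffle_closed[of n P \<alpha> \<beta> w] by blast
  qed
  moreover have "card (\<Union>f\<in>word_perm ` ?S. red_words n f) = (\<Sum>f\<in>word_perm ` ?S. card (red_words n f))"
  proof (rule card_UN_disjoint)
    show "\<forall>f\<in>word_perm ` ?S. \<forall>g\<in>word_perm ` ?S. f \<noteq> g \<longrightarrow> red_words n f \<inter> red_words n g = {}"
      by (auto simp: red_words_def)
  qed (simp_all add: finite_red_shuffles)
  ultimately show ?thesis
    unfolding red_shuffle_perms_def by linarith
qed

section \<open>Reversals, cycles and shifts\<close>

definition reversal :: "nat \<Rightarrow> nat \<Rightarrow> nat \<Rightarrow> nat" where
  "reversal p n c = (if p \<le> c \<and> c \<le> n then n + p - c else c)"

definition shift_perm :: "(nat \<Rightarrow> nat) \<Rightarrow> nat \<Rightarrow> nat" where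
  "shift_perm g c = (if c \<le> 1 then c else Suc (g (c - 1)))"

(* In one-line notation, front_cycle p is p 1 2 ... (p-1) (p+1) ... and back_cycle p n is
   1 ... (p-1) (p+1) ... n p. *)

definition front_cycle :: "nat \<Rightarrow> nat \<Rightarrow> nat" where
  "front_cycle p = word_perm (rev [1..<p])"

definition back_cycle :: "nat \<Rightarrow> nat \<Rightarrow> nat \<Rightarrow> nat" where
  "back_cycle p n = word_perm [p..<n]"

lemma reversal_reversal [simp]: "reversal p n (reversal p n c) = c"
  by (auto simp: reversal_def)

lemma reversal_permutes: "1 \<le> p \<Longrightarrow> reversal p n permutes {1..n}"
  unfolding permutes_def by (metis atLeastAtMost_iff reversal_def reversal_reversal le_trans)

lemma reversal_same [simp]: "reversal p p = id"
  by (rule ext) (auto simp: reversal_def)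

lemma card_increasing_pairs: "card {(a, b). p \<le> a \<and> a < b \<and> b \<le> (n::nat)} = (n + 1 - p) choose 2"
proof (induction n)
  case 0
  have empty: "{(a, b). p \<le> a \<and> a < b \<and> b \<le> (0::nat)} = {}"
    by auto
  show ?case
    unfolding empty by (cases p) simp_all
next
  case (Suc n)
  let ?old = "{(a, b). p \<le> a \<and> a < b \<and> b \<le> n}" and ?new = "(\<lambda>a. (a, Suc n)) ` {p..n}"
  have "{(a, b). p \<le> a \<and> a < b \<and> b \<le> Suc n} = ?old \<union> ?new"
    by auto
  moreover have "finite ?old"
    by (rule finite_subset[of _ "{0..n} \<times> {0..n}"]) auto
  moreover have "?old \<inter> ?new = {}" "card ?new = Suc n - p"
    by (auto simp: card_image inj_on_def)
  ultimately have "card {(a, b). p \<le> a \<and> a < b \<and> b \<le> Suc n} = ((n + 1 - p) choose 2) + (Suc n - p)"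
    using Suc.IH card_Un_disjoint[of ?old ?new] by simp
  also have "\<dots> = (Suc n + 1 - p) choose 2"
    by (cases "p \<le> Suc n") (simp_all add: Suc_diff_le numeral_2_eq_2)
  finally show ?case .
qed

lemma inv_count_reversal: "1 \<le> p \<Longrightarrow> inv_count n (reversal p n) = (n + 1 - p) choose 2"
proof -
  assume "1 \<le> p"
  then have "inversions n (reversal p n) = {(a, b). p \<le> a \<and> a < b \<and> b \<le> n}"
    by (auto simp: inversions_def reversal_def)
  then show ?thesis
    by (simp add: inv_count_def card_increasing_pairs)
qed

lemma word_perm_rev_reversal: "word_perm w = reversal p n \<Longrightarrow> word_perm (rev w) c = reversal p n c"
  using word_perm_rev_inverse[of w c] by (metis reversal_reversal)

lemma front_cycle_Suc: "1 \<le> p \<Longrightarrow> front_cycle (Suc p) = adj p \<circ> front_cycle p"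
  by (simp add: front_cycle_def)

lemma front_cycle_apply:
  "1 \<le> p \<Longrightarrow> front_cycle p c = (if c = 1 then p else if 2 \<le> c \<and> c \<le> p then c - 1 else c)"
proof (induction p arbitrary: c rule: nat_induct_at_least)
  case (Suc p)
  then show ?case
    by (auto simp: front_cycle_Suc adj_def)
qed (simp add: front_cycle_def)

lemma back_cycle_Suc: "p < n \<Longrightarrow> back_cycle p n = adj p \<circ> back_cycle (Suc p) n"
  by (simp add: back_cycle_def upt_conv_Cons)

lemma back_cycle_apply:
  "p \<le> n \<Longrightarrow> back_cycle p n c = (if c = n then p else if p \<le> c \<and> c < n then Suc c else c)"
proof (induction n arbitrary: c rule: nat_induct_at_least)
  case (Suc n)
  then have "back_cycle p (Suc n) c = back_cycle p n (adj n c)"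
    by (simp add: back_cycle_def)
  then show ?case
    using Suc by (auto simp: adj_def)
qed (simp add: back_cycle_def)

lemma word_perm_map_Suc: "0 \<notin> set z \<Longrightarrow> word_perm (map Suc z) = shift_perm (word_perm z)"
proof (induction z)
  case (Cons i z)
  then show ?case
    by (auto simp: shift_perm_def adj_def fun_eq_iff)
qed (auto simp: shift_perm_def)

lemma shift_perm_permutes: "g permutes {1..m} \<Longrightarrow> shift_perm g permutes {1..Suc m}"
proof -
  assume "g permutes {1..m}"
  then obtain y where y: "set y \<subseteq> {1..<m}" "word_perm y = g"
    using permutes_has_reduced_word by blast
  then have "word_perm (map Suc y) = shift_perm g"
    by (auto intro: word_perm_map_Suc)
  moreover have "set (map Suc y) \<subseteq> {1..<Suc m}"
    using y by auto
  ultimately show ?thesis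
    using word_perm_permutes by metis
qed

lemma inv_count_shift_perm: "inv_count (Suc m) (shift_perm g) = inv_count m g"
proof -
  have "inversions (Suc m) (shift_perm g) = (\<lambda>(a, b). (Suc a, Suc b)) ` inversions m g"
  proof (rule set_eqI, clarify)
    fix a b
    show "(a, b) \<in> inversions (Suc m) (shift_perm g) \<longleftrightarrow> (a, b) \<in> (\<lambda>(a, b). (Suc a, Suc b)) ` inversions m g"
    proof
      assume "(a, b) \<in> inversions (Suc m) (shift_perm g)"
      then have "2 \<le> a" "a < b" "(a - 1, b - 1) \<in> inversions m g"
        by (auto simp: inversions_def shift_perm_def split: if_splits)
      then show "(a, b) \<in> (\<lambda>(a, b). (Suc a, Suc b)) ` inversions m g"
        by (intro rev_image_eqI[of "(a - 1, b - 1)"]) auto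
    qed (auto simp: inversions_def shift_perm_def)
  qed
  moreover have "inj_on (\<lambda>(a, b). (Suc a, Suc b)) (inversions m g)"
    by (auto simp: inj_on_def)
  ultimately show ?thesis
    by (simp add: inv_count_def card_image)
qed

lemma inv_count_front_cycle_comp:
  assumes h: "h permutes {1..Suc m}" and h1: "h 1 = 1" and p: "1 \<le> p" "p \<le> Suc m"
  shows "inv_count (Suc m) (front_cycle p \<circ> h) = p - 1 + inv_count (Suc m) h"
  using p
proof (induction p rule: nat_induct_at_least)
  case base
  then show ?case
    by (simp add: front_cycle_def)
next
  case (Suc p)
  let ?H = "front_cycle p \<circ> h"
  have H: "?H permutes {1..Suc m}"
    unfolding front_cycle_def
    using Suc permutes_compose[OF h word_perm_permutes[of "rev [1..<p]"]] by simp
  have "Suc p \<in> ?H ` {1..Suc m}"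
    using permutes_image[OF H] Suc.prems by auto
  then obtain b where b: "1 \<le> b" "b \<le> Suc m" "?H b = Suc p"
    by auto
  have IH: "inv_count (Suc m) ?H = p - 1 + inv_count (Suc m) h"
    by (rule Suc.IH) (use Suc.prems in simp)
  have "inv_count (Suc m) (front_cycle (Suc p) \<circ> h) = inv_count (Suc m) (adj p \<circ> ?H)"
    by (simp only: front_cycle_Suc[OF Suc.hyps] o_assoc)
  also have "\<dots> = Suc (inv_count (Suc m) ?H)"
    using b h1 front_cycle_apply[OF Suc.hyps] inv_count_adj_comp[OF H, of 1 b p] by (cases "b = 1") auto
  also have "\<dots> = Suc p - 1 + inv_count (Suc m) h"
    using IH Suc.hyps by linarith
  finally show ?case .
qed

lemma inv_count_back_cycle_comp:
  assumes h: "h permutes {1..n}" and hn: "h n = n" and p: "1 \<le> p" "p \<le> n"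
  shows "inv_count n (back_cycle p n \<circ> h) = n - p + inv_count n h"
  using p
proof (induction "n - p" arbitrary: p)
  case 0
  then show ?case
    by (simp add: back_cycle_def)
next
  case (Suc k)
  then have pn: "p < n"
    by simp
  let ?H = "back_cycle (Suc p) n \<circ> h"
  have H: "?H permutes {1..n}"
    unfolding back_cycle_def
    using permutes_compose[OF h word_perm_permutes[of "[Suc p..<n]"]] Suc.prems by simp
  have "p \<in> ?H ` {1..n}"
    using permutes_image[OF H] Suc.prems pn by auto
  then obtain a where a: "1 \<le> a" "a \<le> n" "?H a = p"
    by auto
  have IH: "inv_count n ?H = n - Suc p + inv_count n h"
    by (rule Suc.hyps) (use Suc.hyps Suc.prems in auto)
  have "inv_count n (back_cycle p n \<circ> h) = inv_count n (adj p \<circ> ?H)"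
    by (simp only: back_cycle_Suc[OF pn] o_assoc)
  also have "\<dots> = Suc (inv_count n ?H)"
    using a hn back_cycle_apply[of "Suc p" n n] pn inv_count_adj_comp[OF H, of a n p] by (cases "a = n") auto
  also have "\<dots> = n - p + inv_count n h"
    using IH pn by linarith
  finally show ?case .
qed

lemma map_Suc_in_red_words_iff:
  assumes g: "g permutes {1..m}" and y: "set y \<subseteq> {1..<m}"
  shows "map Suc y \<in> red_words (Suc m) (shift_perm g) \<longleftrightarrow> y \<in> red_words m g"
proof -
  have "word_perm (map Suc y) = shift_perm (word_perm y)"
    using y by (intro word_perm_map_Suc) auto
  moreover have "shift_perm (word_perm y) = shift_perm g \<longleftrightarrow> word_perm y = g"
  proof
    assume shift: "shift_perm (word_perm y) = shift_perm g"
    show "word_perm y = g"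
    proof
      fix c
      show "word_perm y c = g c"
      proof (cases c)
        case 0
        then show ?thesis
          using permutes_not_in[OF g] permutes_not_in[OF word_perm_permutes[OF y]] by simp
      next
        case (Suc d)
        then show ?thesis
          using fun_cong[OF shift, of "Suc c"] by (simp add: shift_perm_def)
      qed
    qed
  qed simp
  ultimately show ?thesis
    using y inv_count_shift_perm[of m g] by (auto simp: red_words_def)
qed

lemma front_cycle_prefix_in_red_words_iff:
  assumes g: "g permutes {1..m}" and p: "1 \<le> p" "p \<le> Suc m" and y: "set y \<subseteq> {1..<m}"
  shows "rev [1..<p] @ map Suc y \<in> red_words (Suc m) (front_cycle p \<circ> shift_perm g) \<longleftrightarrow> y \<in> red_words m g"
proof -
  have "inv_count (Suc m) (word_perm (rev [1..<p]) \<circ> shift_perm g) =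
      length (rev [1..<p]) + inv_count (Suc m) (shift_perm g)"
    using inv_count_front_cycle_comp[OF shift_perm_permutes[OF g] _ p]
    by (simp add: shift_perm_def front_cycle_def)
  then have "rev [1..<p] @ map Suc y \<in> red_words (Suc m) (word_perm (rev [1..<p]) \<circ> shift_perm g)
      \<longleftrightarrow> map Suc y \<in> red_words (Suc m) (shift_perm g)"
    by (rule append_in_red_words_iff[rotated]) (use p in auto)
  then show ?thesis
    unfolding front_cycle_def using map_Suc_in_red_words_iff[OF g y] by blast
qed

lemma back_cycle_prefix_in_red_words_iff:
  assumes g: "g permutes {1..m}" and p: "1 \<le> p" "p \<le> Suc m" and y: "set y \<subseteq> {1..<m}"
  shows "[p..<Suc m] @ y \<in> red_words (Suc m) (back_cycle p (Suc m) \<circ> g) \<longleftrightarrow> y \<in> red_words m g"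
proof -
  have g': "g permutes {1..Suc m}"
    using permutes_subset[OF g] by auto
  have "inv_count (Suc m) (word_perm [p..<Suc m] \<circ> g) = length [p..<Suc m] + inv_count (Suc m) g"
    using inv_count_back_cycle_comp[OF g' permutes_not_in[OF g] p] by (simp add: back_cycle_def del: upt_Suc)
  then have "[p..<Suc m] @ y \<in> red_words (Suc m) (word_perm [p..<Suc m] \<circ> g) \<longleftrightarrow> y \<in> red_words (Suc m) g"
    by (rule append_in_red_words_iff[rotated]) (use p in auto)
  then show ?thesis
    unfolding back_cycle_def using red_words_mono[OF g y, of "Suc m"] by simp
qed

lemma reversal_eq_front_cycle: "1 \<le> p \<Longrightarrow> reversal 1 p = front_cycle p \<circ> shift_perm (reversal 1 (p - 1))"
  by (rule ext) (auto simp: front_cycle_apply reversal_def shift_perm_def)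

lemma reversal_eq_shift_perm: "2 \<le> p \<Longrightarrow> reversal p (Suc m) = shift_perm (reversal (p - 1) m)"
  by (rule ext) (auto simp: reversal_def shift_perm_def)

lemma reversal_eq_back_cycle: "1 \<le> p \<Longrightarrow> p \<le> m \<Longrightarrow> reversal p (Suc m) = back_cycle p (Suc m) \<circ> reversal p m"
  by (rule ext) (auto simp: back_cycle_apply reversal_def)

section \<open>Shuffles of reduced words of two reversals\<close>

definition shuffle_perms :: "nat \<Rightarrow> nat \<Rightarrow> (nat \<Rightarrow> nat) set" where
  "shuffle_perms p n = red_shuffle_perms n (\<lambda>x. x < p) (reversal 1 p) (reversal p n)"

lemma shuffle_perms_permutes: "f \<in> shuffle_perms p n \<Longrightarrow> f permutes {1..n}"
  unfolding shuffle_perms_def red_shuffle_perms_def using red_shuffle_letters word_perm_permutes by blast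

lemma shuffle_perms_one: "shuffle_perms 1 n = {reversal 1 n}"
proof -
  have "shuffle_perms 1 n = red_shuffle_perms n (\<lambda>x. \<not> x < 1) (reversal 1 n) id"
    unfolding shuffle_perms_def red_shuffle_perms_def reversal_same
      red_shuffle_swap[of n "\<lambda>x. \<not> x < 1", unfolded not_not] ..
  also have "\<dots> = {reversal 1 n}"
    by (rule red_shuffle_perms_id) (use reversal_permutes[of 1 n] in auto)
  finally show ?thesis .
qed

lemma shuffle_perms_same: "shuffle_perms n n = {reversal 1 n}"
  unfolding shuffle_perms_def reversal_same
  by (rule red_shuffle_perms_id) (use reversal_permutes[of 1 n] in auto)

lemma front_cycle_in_shuffle_perms_iff:
  assumes p: "2 \<le> p" "p \<le> m" and \<sigma>: "\<sigma> permutes {1..m}"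
  shows "front_cycle p \<circ> shift_perm \<sigma> \<in> shuffle_perms p (Suc m) \<longleftrightarrow> \<sigma> \<in> shuffle_perms (p - 1) m"
  unfolding shuffle_perms_def
proof (rule red_shuffle_perms_transfer[where x = "rev [1..<p]" and \<phi> = Suc])
  fix z
  assume z: "set z \<subseteq> {1..<m}"
  have "filter (\<lambda>x. x < p) (rev [1..<p] @ map Suc z) = rev [1..<p] @ map Suc (filter (\<lambda>x. x < p - 1) z)"
    and "filter (\<lambda>x. \<not> x < p) (rev [1..<p] @ map Suc z) = map Suc (filter (\<lambda>x. \<not> x < p - 1) z)"
    using p by (auto simp: filter_map o_def intro!: filter_cong)
  moreover have "rev [1..<p] @ map Suc (filter (\<lambda>x. x < p - 1) z) \<in> red_words (Suc m) (reversal 1 p)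
      \<longleftrightarrow> filter (\<lambda>x. x < p - 1) z \<in> red_words m (reversal 1 (p - 1))"
  proof -
    have "reversal 1 (p - 1) permutes {1..m}"
      using p by (intro permutes_subset[OF reversal_permutes]) auto
    then show ?thesis
      using front_cycle_prefix_in_red_words_iff[of "reversal 1 (p - 1)" m p "filter (\<lambda>x. x < p - 1) z"] z p
        reversal_eq_front_cycle[of p] by auto
  qed
  moreover have "map Suc (filter (\<lambda>x. \<not> x < p - 1) z) \<in> red_words (Suc m) (reversal p (Suc m))
      \<longleftrightarrow> filter (\<lambda>x. \<not> x < p - 1) z \<in> red_words m (reversal (p - 1) m)"
    using map_Suc_in_red_words_iff[of "reversal (p - 1) m" m "filter (\<lambda>x. \<not> x < p - 1) z"] z p
      reversal_permutes[of "p - 1" m] reversal_eq_shift_perm[OF p(1)] by auto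
  ultimately show "red_shuffle (Suc m) (\<lambda>x. x < p) (reversal 1 p) (reversal p (Suc m)) (rev [1..<p] @ map Suc z)
      \<longleftrightarrow> red_shuffle m (\<lambda>x. x < p - 1) (reversal 1 (p - 1)) (reversal (p - 1) m) z"
    by (simp add: red_shuffle_def)
next
  fix z
  assume "set z \<subseteq> {1..<m}"
  then have "word_perm (map Suc z) = shift_perm (word_perm z)"
    by (intro word_perm_map_Suc) auto
  then show "word_perm (rev [1..<p] @ map Suc z) = front_cycle p \<circ> shift_perm (word_perm z)"
    by (simp add: front_cycle_def)
qed (use p \<sigma> front_cycle_prefix_in_red_words_iff in auto)

lemma back_cycle_in_shuffle_perms_iff:
  assumes p: "1 \<le> p" "p \<le> m" and \<sigma>: "\<sigma> permutes {1..m}"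
  shows "back_cycle p (Suc m) \<circ> \<sigma> \<in> shuffle_perms p (Suc m) \<longleftrightarrow> \<sigma> \<in> shuffle_perms p m"
  unfolding shuffle_perms_def
proof (rule red_shuffle_perms_transfer[where x = "[p..<Suc m]" and \<phi> = "\<lambda>x. x" and \<Phi> = "\<lambda>g. g"])
  fix z
  assume z: "set z \<subseteq> {1..<m}"
  have "filter (\<lambda>x. x < p) ([p..<Suc m] @ z) = filter (\<lambda>x. x < p) z"
    and "filter (\<lambda>x. \<not> x < p) ([p..<Suc m] @ z) = [p..<Suc m] @ filter (\<lambda>x. \<not> x < p) z"
    by (auto simp del: upt_Suc)
  moreover have "filter (\<lambda>x. x < p) z \<in> red_words (Suc m) (reversal 1 p)
      \<longleftrightarrow> filter (\<lambda>x. x < p) z \<in> red_words m (reversal 1 p)"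
    using z p by (intro red_words_mono permutes_subset[OF reversal_permutes]) auto
  moreover have "[p..<Suc m] @ filter (\<lambda>x. \<not> x < p) z \<in> red_words (Suc m) (reversal p (Suc m))
      \<longleftrightarrow> filter (\<lambda>x. \<not> x < p) z \<in> red_words m (reversal p m)"
    using back_cycle_prefix_in_red_words_iff[of "reversal p m" m p "filter (\<lambda>x. \<not> x < p) z"] reversal_permutes[of p m]
      reversal_eq_back_cycle[OF p] z p by (auto simp del: upt_Suc)
  ultimately show "red_shuffle (Suc m) (\<lambda>x. x < p) (reversal 1 p) (reversal p (Suc m)) ([p..<Suc m] @ map (\<lambda>x. x) z)
      \<longleftrightarrow> red_shuffle m (\<lambda>x. x < p) (reversal 1 p) (reversal p m) z"
    by (simp add: red_shuffle_def del: upt_Suc)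
qed (use p \<sigma> back_cycle_prefix_in_red_words_iff in \<open>auto simp: back_cycle_def simp del: upt_Suc\<close>)

lemma track_through_small_letters:
  assumes red: "filter (\<lambda>x. x < p) w \<in> red_words n \<alpha>" and w: "w = w1 @ (p - 1) # w2"
    and w1: "\<forall>j\<in>set w1. j \<noteq> p \<and> Suc j \<noteq> p" and p: "1 \<le> p"
  shows "word_perm (rev w) p = word_perm (rev (filter (\<lambda>x. x < p) w)) p"
proof -
  let ?Q = "\<lambda>x. x < p"
  let ?u0 = "filter ?Q w1 @ [p - 1]"
  have fixes_p: "word_perm (rev w1) p = p" "word_perm (rev (filter ?Q w1)) p = p"
    using w1 by (auto intro!: word_perm_fixes)
  then have start: "word_perm (rev ?u0) p = p - 1"
    using p by (simp add: adj_def)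
  have "word_perm (rev w2) (p - 1) = word_perm (rev (filter ?Q w2)) (p - 1)"
  proof (rule word_perm_rev_filter[where R = "{..<p}"])
    show "adj j v = v" if "\<not> j < p" "v \<in> {..<p}" for j v
      using that by (auto simp: adj_def)
  next
    fix u r
    assume "u @ r = filter ?Q w2"
    then have "(?u0 @ u) @ r \<in> red_words n \<alpha>"
      using red p w by simp
    then have prefix: "?u0 @ u \<in> red_words n (word_perm (?u0 @ u))"
      by (rule red_words_prefix)
    have "set u \<subseteq> set (filter ?Q w2)"
      using \<open>u @ r = filter ?Q w2\<close> by (metis set_append Un_upper1)
    then have letters: "set (?u0 @ u) \<subseteq> {..<p}"
      using p by auto
    have "word_perm (rev ?u0) p < p"
      using start p by simp
    then have "word_perm (rev (?u0 @ u)) p < p"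
      by (rule red_word_position_of_max_stays_left[OF prefix letters])
    then show "word_perm (rev u) (p - 1) \<in> {..<p}"
      using start by simp
  qed
  then show ?thesis
    using w fixes_p p by (simp add: adj_def)
qed

lemma track_through_large_letters:
  assumes red: "filter (\<lambda>x. \<not> x < p) w \<in> red_words n \<beta>" and w: "w = w1 @ p # w2"
    and w1: "\<forall>j\<in>set w1. j \<noteq> p \<and> Suc j \<noteq> p"
  shows "word_perm (rev w) p = word_perm (rev (filter (\<lambda>x. \<not> x < p) w)) p"
proof -
  let ?Q = "\<lambda>x. \<not> x < p"
  let ?u0 = "filter ?Q w1 @ [p]"
  have fixes_p: "word_perm (rev w1) p = p" "word_perm (rev (filter ?Q w1)) p = p"
    using w1 by (auto intro!: word_perm_fixes)
  then have start: "word_perm (rev ?u0) p = Suc p"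
    by (simp add: adj_def)
  have "word_perm (rev w2) (Suc p) = word_perm (rev (filter ?Q w2)) (Suc p)"
  proof (rule word_perm_rev_filter[where R = "{p<..}"])
    show "adj j v = v" if "\<not> \<not> j < p" "v \<in> {p<..}" for j v
      using that by (auto simp: adj_def)
  next
    fix u r
    assume "u @ r = filter ?Q w2"
    then have "(?u0 @ u) @ r \<in> red_words n \<beta>"
      using red w by simp
    then have prefix: "?u0 @ u \<in> red_words n (word_perm (?u0 @ u))"
      by (rule red_words_prefix)
    have "set u \<subseteq> set (filter ?Q w2)"
      using \<open>u @ r = filter ?Q w2\<close> by (metis set_append Un_upper1)
    then have letters: "\<forall>j\<in>set (?u0 @ u). p \<le> j"
      by auto
    have "p < word_perm (rev ?u0) p"
      using start by simp
    then have "p < word_perm (rev (?u0 @ u)) p"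
      by (rule red_word_position_of_min_stays_right[OF prefix letters])
    then show "word_perm (rev u) (Suc p) \<in> {p<..}"
      using start by simp
  qed
  then show ?thesis
    using w fixes_p by (simp add: adj_def)
qed

lemma red_shuffle_reversals_position_of_p:
  assumes w: "red_shuffle n (\<lambda>x. x < p) (reversal 1 p) (reversal p n) w" and p: "1 < p" "p < n"
  shows "word_perm (rev w) p = 1 \<or> word_perm (rev w) p = n"
proof -
  have small: "filter (\<lambda>x. x < p) w \<in> red_words n (reversal 1 p)"
    and large: "filter (\<lambda>x. \<not> x < p) w \<in> red_words n (reversal p n)"
    using w by (simp_all add: red_shuffle_def)
  have small_position: "word_perm (rev (filter (\<lambda>x. x < p) w)) p = 1"
    using word_perm_rev_reversal[of "filter (\<lambda>x. x < p) w" 1 p p] small p by (simp add: red_words_def reversal_def)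
  have large_position: "word_perm (rev (filter (\<lambda>x. \<not> x < p) w)) p = n"
    using word_perm_rev_reversal[of "filter (\<lambda>x. \<not> x < p) w" p n p] large p by (simp add: red_words_def reversal_def)
  show ?thesis
  proof (cases "\<exists>j\<in>set w. j = p \<or> Suc j = p")
    case False
    then have "word_perm (rev (filter (\<lambda>x. x < p) w)) p = p"
      by (intro word_perm_fixes) auto
    then show ?thesis
      using small_position p by simp
  next
    case True
    then obtain w1 j w2 where "w = w1 @ j # w2" "j = p \<or> Suc j = p"
        and w1: "\<forall>j\<in>set w1. j \<noteq> p \<and> Suc j \<noteq> p"
      using split_list_first_prop[of w "\<lambda>j. j = p \<or> Suc j = p"] by blast
    then consider "w = w1 @ (p - 1) # w2" | "w = w1 @ p # w2"
      by force
    then show ?thesis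
    proof cases
      case 1
      then show ?thesis
        using track_through_small_letters[OF small 1 w1] small_position p by simp
    next
      case 2
      then show ?thesis
        using track_through_large_letters[OF large 2 w1] large_position by simp
    qed
  qed
qed

lemma shuffle_perms_endpoint:
  assumes f: "f \<in> shuffle_perms p n" and p: "1 < p" "p < n"
  shows "f 1 = p \<or> f n = p"
proof -
  obtain w where w: "red_shuffle n (\<lambda>x. x < p) (reversal 1 p) (reversal p n) w" "word_perm w = f"
    using f by (auto simp: shuffle_perms_def red_shuffle_perms_def)
  then have "f (word_perm (rev w) p) = p"
    using word_perm_rev_inverse[of w p] by simp
  then show ?thesis
    using red_shuffle_reversals_position_of_p[OF w(1) p] by auto
qed

section \<open>One-line notation\<close>

lemma perm_of_permutes: "xs \<in> perms n \<Longrightarrow> perm_of xs permutes {1..n}"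
proof -
  assume "xs \<in> perms n"
  then have len: "length xs = n" and dist: "distinct xs" and set: "set xs = {1..n}"
    by (auto simp: perms_def)
  have "bij_betw (\<lambda>c. xs ! (c - 1)) {1..n} {1..n}"
  proof (rule bij_betw_imageI)
    show "inj_on (\<lambda>c. xs ! (c - 1)) {1..n}"
      using dist len by (auto simp: inj_on_def nth_eq_iff_index_eq)
    have "(\<lambda>c. xs ! (c - 1)) ` {1..n} = (\<lambda>k. xs ! k) ` {..<n}"
      unfolding image_Suc_lessThan[symmetric] by (simp add: image_image)
    also have "\<dots> = set xs"
      using len by (auto simp: in_set_conv_nth)
    finally show "(\<lambda>c. xs ! (c - 1)) ` {1..n} = {1..n}"
      using set by simp
  qed
  then have "bij_betw (perm_of xs) {1..n} {1..n}"
    by (rule bij_betw_cong[THEN iffD1, rotated]) (simp add: perm_of_def len)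
  then show ?thesis
    by (rule bij_imp_permutes) (auto simp: perm_of_def len)
qed

lemma inj_on_perm_of: "inj_on perm_of (perms n)"
proof (rule inj_onI)
  fix xs ys
  assume xs: "xs \<in> perms n" and ys: "ys \<in> perms n" and eq: "perm_of xs = perm_of ys"
  show "xs = ys"
  proof (rule nth_equalityI)
    show "length xs = length ys"
      using xs ys by (simp add: perms_def)
    fix k
    assume "k < length xs"
    then show "xs ! k = ys ! k"
      using fun_cong[OF eq, of "Suc k"] xs ys by (simp add: perm_of_def perms_def)
  qed
qed

lemma perm_of_map_upt:
  assumes f: "f permutes {1..n}"
  shows "map f [1..<n+1] \<in> perms n" "perm_of (map f [1..<n+1]) = f"
proof -
  have set_upt: "set [1..<n+1] = {1..n}"
    by auto
  have "distinct (map f [1..<n+1])"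
    using set_upt inj_on_subset[OF permutes_inj[OF f] subset_UNIV] by (simp add: distinct_map del: upt_Suc)
  moreover have "set (map f [1..<n+1]) = {1..n}"
    using set_upt permutes_image[OF f] by (simp del: upt_Suc)
  ultimately show "map f [1..<n+1] \<in> perms n"
    by (simp add: perms_def del: upt_Suc)
  show "perm_of (map f [1..<n+1]) = f"
  proof
    fix c
    show "perm_of (map f [1..<n+1]) c = f c"
    proof (cases "1 \<le> c \<and> c \<le> n")
      case True
      have lt: "c - 1 < length [1..<n+1]"
        using True by (simp del: upt_Suc) arith
      have "[1..<n+1] ! (c - 1) = c"
        using True by (simp add: nth_upt del: upt_Suc)
      then have "map f [1..<n+1] ! (c - 1) = f c"
        using nth_map[OF lt, of f] by simp
      then show ?thesis
        using True by (simp add: perm_of_def del: upt_Suc)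
    next
      case False
      then show ?thesis
        using permutes_not_in[OF f, of c] by (auto simp: perm_of_def simp del: upt_Suc)
    qed
  qed
qed

lemma bij_betw_perm_of: "bij_betw perm_of {xs \<in> perms n. perm_of xs \<in> F} (F \<inter> {f. f permutes {1..n}})"
proof (rule bij_betw_imageI)
  show "inj_on perm_of {xs \<in> perms n. perm_of xs \<in> F}"
    using inj_on_perm_of by (rule inj_on_subset) auto
  show "perm_of ` {xs \<in> perms n. perm_of xs \<in> F} = F \<inter> {f. f permutes {1..n}}"
  proof (intro equalityI subsetI)
    fix f
    assume "f \<in> perm_of ` {xs \<in> perms n. perm_of xs \<in> F}"
    then show "f \<in> F \<inter> {f. f permutes {1..n}}"
      using perm_of_permutes by auto
  next
    fix f
    assume f: "f \<in> F \<inter> {f. f permutes {1..n}}"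
    then have "map f [1..<n+1] \<in> {xs \<in> perms n. perm_of xs \<in> F}"
      using perm_of_map_upt by auto
    then show "f \<in> perm_of ` {xs \<in> perms n. perm_of xs \<in> F}"
      by (rule rev_image_eqI) (use f perm_of_map_upt in auto)
  qed
qed

lemma rev_upt_in_perms: "rev [1..<n+1] \<in> perms n"
  by (simp add: perms_def atLeastLessThanSuc_atLeastAtMost del: upt_Suc)

lemma perm_of_rev_upt: "perm_of (rev [1..<n+1]) = reversal 1 n"
proof (rule ext)
  fix c
  show "perm_of (rev [1..<n+1]) c = reversal 1 n c"
  proof (cases "1 \<le> c \<and> c \<le> n")
    case True
    have "rev [1..<n+1] ! (c - 1) = [1..<n+1] ! (length [1..<n+1] - Suc (c - 1))"
      using True by (intro rev_nth) auto
    also have "\<dots> = n + 1 - c"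
      using True by (simp add: nth_upt Suc_diff_le del: upt_Suc)
    finally show ?thesis
      using True by (simp add: perm_of_def reversal_def)
  qed (auto simp: perm_of_def reversal_def)
qed

lemma perms_with_reversal: "{xs \<in> perms n. perm_of xs \<in> {reversal 1 n}} = {rev [1..<n+1]}"
  using inj_on_perm_of[THEN inj_onD] rev_upt_in_perms perm_of_rev_upt by fastforce

lemma num_reduced_eq_card_red_words:
  assumes xs: "xs \<in> perms n"
  shows "num_reduced n xs = card (red_words n (perm_of xs))"
proof -
  have f: "perm_of xs permutes {1..n}"
    using perm_of_permutes[OF xs] .
  have "coxeter_length n xs = inv_count n (perm_of xs)"
    unfolding coxeter_length_def
  proof (rule Least_equality)
    show "\<exists>w\<in>words_of n xs. length w = inv_count n (perm_of xs)"
      using permutes_has_reduced_word[OF f] by (auto simp: words_of_def)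
  next
    fix k
    assume "\<exists>w\<in>words_of n xs. length w = k"
    then obtain w where "set w \<subseteq> {1..<n}" "word_perm w = perm_of xs" "length w = k"
      by (auto simp: words_of_def)
    then show "inv_count n (perm_of xs) \<le> k"
      using inv_count_word_perm_le[of w n] by simp
  qed
  then have "reduced_words n xs = red_words n (perm_of xs)"
    by (auto simp: reduced_words_def words_of_def red_words_def)
  then show ?thesis
    by (simp add: num_reduced_def)
qed

lemma num_reduced_rev_upt: "num_reduced n (rev [1..<n+1]) = card (red_words n (reversal 1 n))"
  using num_reduced_eq_card_red_words[OF rev_upt_in_perms] perm_of_rev_upt by simp

lemma fl_eq_map:
  assumes ys: "set ys = {1..n} - {p}" and p: "1 \<le> p"
  shows "fl ys = map (\<lambda>v. if v < p then v else v - 1) ys"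
  unfolding fl_def
proof (rule map_cong[OF refl])
  fix x
  assume "x \<in> set ys"
  then have x: "1 \<le> x" "x \<le> n" "x \<noteq> p"
    using ys by auto
  have below: "{y \<in> set ys. y \<le> x} = {1..x} - {p}"
  proof (rule set_eqI)
    fix y
    show "y \<in> {y \<in> set ys. y \<le> x} \<longleftrightarrow> y \<in> {1..x} - {p}"
      unfolding ys using x by (simp only: mem_Collect_eq Diff_iff atLeastAtMost_iff singleton_iff) linarith
  qed
  show "card {y \<in> set ys. y \<le> x} = (if x < p then x else x - 1)"
  proof (cases "x < p")
    case True
    then have "{1..x} - {p} = {1..x}"
      by auto
    then show ?thesis
      using below True by simp
  next
    case False
    then have "p \<in> {1..x}"
      using x p by simp
    then show ?thesis
      using below False by (simp add: card_Diff_singleton)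
  qed
qed

lemma fl_in_perms:
  assumes ys: "set ys = {1..Suc m} - {p}" "distinct ys" "length ys = m" and p: "1 \<le> p" "p \<le> Suc m"
  shows "fl ys \<in> perms m"
proof -
  let ?r = "\<lambda>v::nat. if v < p then v else v - 1"
  have "inj_on ?r ({1..Suc m} - {p})"
    by (rule inj_onI) (auto split: if_splits)
  moreover have "?r ` ({1..Suc m} - {p}) = {1..m}"
  proof (intro equalityI subsetI)
    fix c
    assume "c \<in> {1..m}"
    then show "c \<in> ?r ` ({1..Suc m} - {p})"
      by (cases "c < p") (auto intro: rev_image_eqI[of c] rev_image_eqI[of "Suc c"])
  qed (use p in auto)
  ultimately show ?thesis
    using ys fl_eq_map[OF ys(1) p(1)] by (simp add: perms_def distinct_map)
qed

lemma cycles_expand_fl: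
  assumes ys: "set ys = {1..Suc m} - {p}" "length ys = m" and p: "1 \<le> p" "p \<le> Suc m"
    and c: "1 \<le> c" "c \<le> m"
  shows "front_cycle p (Suc (perm_of (fl ys) c)) = ys ! (c - 1)"
    and "back_cycle p (Suc m) (perm_of (fl ys) c) = ys ! (c - 1)"
proof -
  have "ys ! (c - 1) \<in> set ys"
    using c ys(2) by simp
  then have v: "1 \<le> ys ! (c - 1)" "ys ! (c - 1) \<le> Suc m" "ys ! (c - 1) \<noteq> p"
    using ys(1) by auto
  have "perm_of (fl ys) c = (if ys ! (c - 1) < p then ys ! (c - 1) else ys ! (c - 1) - 1)"
    using c ys by (simp add: perm_of_def fl_eq_map[OF ys(1) p(1)])
  then show "front_cycle p (Suc (perm_of (fl ys) c)) = ys ! (c - 1)"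
    and "back_cycle p (Suc m) (perm_of (fl ys) c) = ys ! (c - 1)"
    using v p by (auto simp: front_cycle_apply back_cycle_apply)
qed

lemma perm_of_Cons_eq:
  assumes xs: "xs \<in> perms (Suc m)" and hd: "hd xs = p"
  shows "fl (tl xs) \<in> perms m" "perm_of xs = front_cycle p \<circ> shift_perm (perm_of (fl (tl xs)))"
proof -
  have len: "length xs = Suc m" and dist: "distinct xs" and set: "set xs = {1..Suc m}"
    using xs by (auto simp: perms_def)
  obtain ys where xs_eq: "xs = p # ys"
    using len hd by (cases xs) auto
  have ys: "set ys = {1..Suc m} - {p}" "distinct ys" "length ys = m"
    using set dist len xs_eq by auto
  have p: "1 \<le> p" "p \<le> Suc m"
    using set xs_eq by auto
  show "fl (tl xs) \<in> perms m"
    using fl_in_perms[OF ys p] xs_eq by simp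
  have len_fl: "length (fl ys) = m"
    using ys by (simp add: fl_def)
  show "perm_of xs = front_cycle p \<circ> shift_perm (perm_of (fl (tl xs)))"
  proof
    fix c
    consider "c = 0" | "c = 1" | "2 \<le> c" "c \<le> Suc m" | "Suc m < c"
      by linarith
    then show "perm_of xs c = (front_cycle p \<circ> shift_perm (perm_of (fl (tl xs)))) c"
    proof cases
      case 3
      then have "front_cycle p (Suc (perm_of (fl ys) (c - 1))) = ys ! (c - 2)"
        using cycles_expand_fl(1)[OF ys(1,3) p, of "c - 1"] by (simp add: numeral_2_eq_2)
      then show ?thesis
        using 3 xs_eq len by (simp add: perm_of_def shift_perm_def nth_Cons' numeral_2_eq_2)
    qed (use xs_eq len len_fl p in \<open>auto simp: perm_of_def shift_perm_def front_cycle_apply\<close>)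
  qed
qed

lemma perm_of_snoc_eq:
  assumes xs: "xs \<in> perms (Suc m)" and last: "last xs = p"
  shows "fl (butlast xs) \<in> perms m" "perm_of xs = back_cycle p (Suc m) \<circ> perm_of (fl (butlast xs))"
proof -
  have len: "length xs = Suc m" and dist: "distinct xs" and set: "set xs = {1..Suc m}"
    using xs by (auto simp: perms_def)
  obtain ys where xs_eq: "xs = ys @ [p]"
    using len last by (metis append_butlast_last_id length_0_conv nat.distinct(1))
  have ys: "set ys = {1..Suc m} - {p}" "distinct ys" "length ys = m"
    using set dist len xs_eq by auto
  have p: "1 \<le> p" "p \<le> Suc m"
    using set xs_eq by auto
  show "fl (butlast xs) \<in> perms m"
    using fl_in_perms[OF ys p] xs_eq by simp
  have len_fl: "length (fl ys) = m"
    using ys by (simp add: fl_def)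
  show "perm_of xs = back_cycle p (Suc m) \<circ> perm_of (fl (butlast xs))"
  proof
    fix c
    consider "1 \<le> c" "c \<le> m" | "c = Suc m" | "c = 0 \<or> Suc m < c"
      by linarith
    then show "perm_of xs c = (back_cycle p (Suc m) \<circ> perm_of (fl (butlast xs))) c"
    proof cases
      case 1
      then show ?thesis
        using cycles_expand_fl(2)[OF ys(1,3) p 1] xs_eq ys(3) 1 by (auto simp: perm_of_def nth_append)
    qed (use xs_eq len len_fl p in \<open>auto simp: perm_of_def back_cycle_apply nth_append\<close>)
  qed
qed

section \<open>The sets B(m,n)\<close>

(* The defining equation of B would be unfolded indefinitely by the simplifier. *)

declare B.simps [simp del]

lemma B_trivial_cases: "p = 1 \<or> p = n \<Longrightarrow> B p n = {rev [1..<n+1]}"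
  by (subst B.simps) (auto simp del: upt_Suc)

lemma B_Suc:
  "2 \<le> p \<Longrightarrow> p \<le> m \<Longrightarrow> B p (Suc m) = {xs \<in> perms (Suc m).
     (hd xs = p \<and> fl (tl xs) \<in> B (p - 1) m) \<or> (last xs = p \<and> fl (butlast xs) \<in> B p m)}"
  by (subst B.simps) (simp add: Let_def del: upt_Suc)

lemma perm_of_in_shuffle_perms_Suc_iff:
  assumes xs: "xs \<in> perms (Suc m)" and p: "2 \<le> p" "p \<le> m"
  shows "perm_of xs \<in> shuffle_perms p (Suc m) \<longleftrightarrow>
    (hd xs = p \<and> perm_of (fl (tl xs)) \<in> shuffle_perms (p - 1) m) \<or>
    (last xs = p \<and> perm_of (fl (butlast xs)) \<in> shuffle_perms p m)"
proof -
  have "perm_of xs \<in> shuffle_perms p (Suc m) \<longleftrightarrow> perm_of (fl (tl xs)) \<in> shuffle_perms (p - 1) m"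
    if "hd xs = p"
    using perm_of_Cons_eq[OF xs that] front_cycle_in_shuffle_perms_iff[OF p perm_of_permutes] by simp
  moreover have "perm_of xs \<in> shuffle_perms p (Suc m) \<longleftrightarrow> perm_of (fl (butlast xs)) \<in> shuffle_perms p m"
    if "last xs = p"
    using perm_of_snoc_eq[OF xs that] back_cycle_in_shuffle_perms_iff[of p m, OF _ p(2) perm_of_permutes] p
    by simp
  moreover have "hd xs = p \<or> last xs = p" if "perm_of xs \<in> shuffle_perms p (Suc m)"
    using shuffle_perms_endpoint[OF that] p xs by (cases xs) (auto simp: perms_def perm_of_def last_conv_nth)
  ultimately show ?thesis
    by blast
qed

lemma B_eq_shuffle_perms: "1 \<le> p \<Longrightarrow> p \<le> n \<Longrightarrow> B p n = {xs \<in> perms n. perm_of xs \<in> shuffle_perms p n}"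
proof (induction n arbitrary: p)
  case (Suc m)
  show ?case
  proof (cases "p = 1 \<or> p = Suc m")
    case True
    then have "B p (Suc m) = {rev [1..<Suc m + 1]}" "shuffle_perms p (Suc m) = {reversal 1 (Suc m)}"
      using B_trivial_cases shuffle_perms_one shuffle_perms_same by auto
    then show ?thesis
      by (simp only: perms_with_reversal)
  next
    case False
    then have p: "2 \<le> p" "p \<le> m"
      using Suc.prems by auto
    have "B (p - 1) m = {xs \<in> perms m. perm_of xs \<in> shuffle_perms (p - 1) m}"
      "B p m = {xs \<in> perms m. perm_of xs \<in> shuffle_perms p m}"
      using Suc.IH[of "p - 1"] Suc.IH[of p] p by simp_all
    then show ?thesis
      unfolding B_Suc[OF p] using perm_of_in_shuffle_perms_Suc_iff[OF _ p] perm_of_Cons_eq(1) perm_of_snoc_eq(1)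
      by auto
  qed
qed simp

lemma sum_num_reduced_B:
  assumes "1 \<le> p" "p \<le> n"
  shows "(\<Sum>\<pi>\<in>B p n. num_reduced n \<pi>) = card {w. red_shuffle n (\<lambda>x. x < p) (reversal 1 p) (reversal p n) w}"
proof -
  have B: "B p n = {xs \<in> perms n. perm_of xs \<in> shuffle_perms p n}"
    using B_eq_shuffle_perms assms .
  have "(\<Sum>\<pi>\<in>B p n. num_reduced n \<pi>) = (\<Sum>\<pi>\<in>B p n. card (red_words n (perm_of \<pi>)))"
    unfolding B using num_reduced_eq_card_red_words by (intro sum.cong) auto
  also have "\<dots> = (\<Sum>f\<in>shuffle_perms p n. card (red_words n f))"
  proof -
    have "shuffle_perms p n \<inter> {f. f permutes {1..n}} = shuffle_perms p n"
      using shuffle_perms_permutes by blast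
    then show ?thesis
      unfolding B using sum.reindex_bij_betw[OF bij_betw_perm_of[of n], of "\<lambda>f. card (red_words n f)"]
      by (simp only:)
  qed
  also have "\<dots> = card {w. red_shuffle n (\<lambda>x. x < p) (reversal 1 p) (reversal p n) w}"
    unfolding shuffle_perms_def by (rule sum_card_red_words_red_shuffles)
  finally show ?thesis .
qed

lemma red_words_reversal_small_letters:
  assumes "1 \<le> p" "p \<le> n"
  shows "red_words n (reversal 1 p) \<inter> lists {x. x < p} = red_words p (reversal 1 p)"
proof (intro equalityI subsetI)
  fix u
  assume u: "u \<in> red_words n (reversal 1 p) \<inter> lists {x. x < p}"
  then have "set u \<subseteq> {1..<p}"
    by (auto simp: red_words_def)
  then show "u \<in> red_words p (reversal 1 p)"
    using red_words_mono[OF reversal_permutes _ assms(2)] u by auto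
next
  fix u
  assume u: "u \<in> red_words p (reversal 1 p)"
  then have "set u \<subseteq> {1..<p}"
    by (auto simp: red_words_def)
  then show "u \<in> red_words n (reversal 1 p) \<inter> lists {x. x < p}"
    using red_words_mono[OF reversal_permutes _ assms(2)] u by auto
qed

lemma red_words_shift_perm_large_letters:
  assumes g: "g permutes {1..m}" and p: "1 \<le> p"
  shows "red_words (Suc m) (shift_perm g) \<inter> lists {x. \<not> x < Suc p} = map Suc ` (red_words m g \<inter> lists {x. \<not> x < p})"
proof (intro equalityI subsetI)
  fix v
  assume v: "v \<in> red_words (Suc m) (shift_perm g) \<inter> lists {x. \<not> x < Suc p}"
  then have letters: "\<forall>x\<in>set v. Suc p \<le> x \<and> x < Suc m"
    by (auto simp: red_words_def)
  define y where "y = map (\<lambda>x. x - 1) v"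
  have "map Suc y = v"
    unfolding y_def map_map using letters p by (intro map_idI) auto
  then have v_eq: "v = map Suc y"
    by simp
  have y: "set y \<subseteq> {1..<m}" "set y \<subseteq> {x. \<not> x < p}"
    using letters p by (fastforce simp: y_def)+
  have "map Suc y \<in> red_words (Suc m) (shift_perm g)"
    using v v_eq by simp
  then have "y \<in> red_words m g"
    using map_Suc_in_red_words_iff[OF g y(1)] by simp
  then show "v \<in> map Suc ` (red_words m g \<inter> lists {x. \<not> x < p})"
    using v_eq y(2) by auto
next
  fix v
  assume "v \<in> map Suc ` (red_words m g \<inter> lists {x. \<not> x < p})"
  then obtain y where y: "y \<in> red_words m g" "set y \<subseteq> {x. \<not> x < p}" "v = map Suc y"
    by auto
  have "set y \<subseteq> {1..<m}"
    using y(1) by (simp add: red_words_def)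
  then have "map Suc y \<in> red_words (Suc m) (shift_perm g)"
    using map_Suc_in_red_words_iff[OF g] y(1) by simp
  then show "v \<in> red_words (Suc m) (shift_perm g) \<inter> lists {x. \<not> x < Suc p}"
    using y(2,3) by auto
qed

lemma card_red_words_reversal_large_letters:
  "1 \<le> p \<Longrightarrow> p \<le> n \<Longrightarrow>
    card (red_words n (reversal p n) \<inter> lists {x. \<not> x < p}) = card (red_words (n + 1 - p) (reversal 1 (n + 1 - p)))"
proof (induction p arbitrary: n rule: nat_induct_at_least)
  case base
  have "red_words n (reversal 1 n) \<inter> lists {x. \<not> x < 1} = red_words n (reversal 1 n)"
    by (auto simp: red_words_def)
  then show ?case
    by simp
next
  case (Suc p)
  then obtain m where n: "n = Suc m" and pm: "p \<le> m"
    by (cases n) auto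
  have g: "reversal p m permutes {1..m}"
    using reversal_permutes Suc.hyps by simp
  have "reversal (Suc p) (Suc m) = shift_perm (reversal p m)"
    using reversal_eq_shift_perm[of "Suc p" m] Suc.hyps by simp
  then have "card (red_words n (reversal (Suc p) n) \<inter> lists {x. \<not> x < Suc p})
      = card (map Suc ` (red_words m (reversal p m) \<inter> lists {x. \<not> x < p}))"
    unfolding n by (simp only: red_words_shift_perm_large_letters[OF g Suc.hyps])
  also have "\<dots> = card (red_words m (reversal p m) \<inter> lists {x. \<not> x < p})"
    by (rule card_image) (simp add: inj_on_def)
  also have "\<dots> = card (red_words (m + 1 - p) (reversal 1 (m + 1 - p)))"
    using Suc.IH[OF pm] Suc.hyps by simp
  finally show ?case
    using n by simp
qed

lemma card_reversal_shuffles: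
  assumes "1 \<le> p" "p \<le> n"
  shows "card {w. red_shuffle n (\<lambda>x. x < p) (reversal 1 p) (reversal p n) w} =
    ((p choose 2) + ((n + 1 - p) choose 2) choose (p choose 2))
      * num_reduced p (rev [1..<p+1]) * num_reduced (n + 1 - p) (rev [1..<(n + 1 - p)+1])"
proof -
  have "inv_count n (reversal 1 p) = p choose 2"
    using inv_count_permutes_mono[OF reversal_permutes[of 1 p] assms(2)] inv_count_reversal[of 1 p] by simp
  moreover have "inv_count n (reversal p n) = (n + 1 - p) choose 2"
    using inv_count_reversal assms(1) by simp
  moreover have "card (red_words n (reversal 1 p) \<inter> lists {x. x < p}) = num_reduced p (rev [1..<p+1])"
    unfolding num_reduced_rev_upt red_words_reversal_small_letters[OF assms] ..
  moreover have "card (red_words n (reversal p n) \<inter> lists {x. \<not> x < p}) =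
      num_reduced (n + 1 - p) (rev [1..<(n + 1 - p)+1])"
    unfolding num_reduced_rev_upt card_red_words_reversal_large_letters[OF assms] ..
  ultimately show ?thesis
    by (simp only: card_red_shuffles)
qed

theorem proposition1p3:
  fixes n p :: nat
  assumes "1 \<le> n" and "1 \<le> p" and "p \<le> n"
  shows "((p choose 2) + ((n + 1 - p) choose 2) choose (p choose 2))
           * num_reduced p (rev [1..<p+1])
           * num_reduced (n + 1 - p) (rev [1..<(n + 1 - p)+1])
         = (\<Sum>\<pi>\<in>B p n. num_reduced n \<pi>)"
  using sum_num_reduced_B[OF assms(2,3)] card_reversal_shuffles[OF assms(2,3)] by simp

end
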